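(* Let $\Omega$ be a domain in $\mathbb R^2$ and let $F$ be a compact subdomain of $\Omega$. Suppose $x\in\Omega\setminus\overline F$, $r>0$ with $B(x,2r)\subset\Omega\setminus\overline F$, and $\gamma$ is a curve joining $x$ to the circle $S(x,2r)$. Then $\mathrm{cap}(F,\gamma;\Omega)>c(r)>0$, where $c(r)$ is a positive constant depending on $r$ (and not on $\gamma$).
   Context: For disjoint sets $F_0,F_1\subset\Omega$, the conformal capacity is $\mathrm{cap}(F_0,F_1;\Omega)=\inf\int_\Omega|\nabla v|^2dx$, where the infimum is over nonnegative $v\in C(\Omega)$ with square integrable weak gradient, $v=0$ in a neighborhood of $F_0$, and $v\ge1$ in a neighborhood of $F_1$. $B(x,r)$ and $S(x,r)$ denote the Euclidean disc and circle of radius $r$ centered at $x$. *)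

theory Defs
  imports "HOL-Analysis.Analysis"
begin

type_synonym R2 = "real^2"

fun Ck :: "nat \<Rightarrow> (R2 \<Rightarrow> real) \<Rightarrow> bool" where
  "Ck 0 f = continuous_on UNIV f"
| "Ck (Suc k) f = ((\<forall>x. f differentiable (at x)) \<and>
      (\<forall>i\<in>(Basis::R2 set). Ck k (\<lambda>x. frechet_derivative f (at x) i)))"

definition smooth_fun :: "(R2 \<Rightarrow> real) \<Rightarrow> bool" where
  "smooth_fun f \<longleftrightarrow> (\<forall>k. Ck k f)"

definition test_fun :: "R2 set \<Rightarrow> (R2 \<Rightarrow> real) \<Rightarrow> bool" where
  "test_fun \<Omega> \<phi> \<longleftrightarrow> smooth_fun \<phi> \<and>
     compact (closure {x. \<phi> x \<noteq> 0}) \<and> closure {x. \<phi> x \<noteq> 0} \<subseteq> \<Omega>"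

definition weak_gradient :: "R2 set \<Rightarrow> (R2 \<Rightarrow> real) \<Rightarrow> (R2 \<Rightarrow> R2) \<Rightarrow> bool" where
  "weak_gradient \<Omega> v G \<longleftrightarrow>
     (\<forall>K. compact K \<and> K \<subseteq> \<Omega> \<longrightarrow> G absolutely_integrable_on K) \<and>
     (\<forall>\<phi> i. test_fun \<Omega> \<phi> \<and> i \<in> Basis \<longrightarrow>
        integral \<Omega> (\<lambda>x. v x * frechet_derivative \<phi> (at x) i)
        = - integral \<Omega> (\<lambda>x. (G x \<bullet> i) * \<phi> x))"

definition cap_admissible :: "R2 set \<Rightarrow> R2 set \<Rightarrow> R2 set \<Rightarrow> (R2 \<Rightarrow> real) \<Rightarrow> (R2 \<Rightarrow> R2) \<Rightarrow> bool" where
  "cap_admissible F0 F1 \<Omega> v G \<longleftrightarrow>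
     continuous_on \<Omega> v \<and> (\<forall>x\<in>\<Omega>. 0 \<le> v x) \<and>
     weak_gradient \<Omega> v G \<and> (\<lambda>x. norm (G x) ^ 2) integrable_on \<Omega> \<and>
     (\<exists>U. open U \<and> F0 \<subseteq> U \<and> (\<forall>x\<in>U \<inter> \<Omega>. v x = 0)) \<and>
     (\<exists>U. open U \<and> F1 \<subseteq> U \<and> (\<forall>x\<in>U \<inter> \<Omega>. 1 \<le> v x))"

text \<open>Conformal capacity (infimum of the Dirichlet integral; \<open>\<infinity>\<close> if no admissible function).\<close>
definition cap :: "R2 set \<Rightarrow> R2 set \<Rightarrow> R2 set \<Rightarrow> ereal" where
  "cap F0 F1 \<Omega> = Inf {ereal (integral \<Omega> (\<lambda>x. norm (G x) ^ 2)) | v G. cap_admissible F0 F1 \<Omega> v G}"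

end

(*
  Fix an admissible pair (v, G) for the condenser (F, gamma; Omega) and compare averages of v
  against smooth bumps. Sliding a bump in one coordinate direction changes such an average
  by at most a flux integral of |G| against a fixed weight: the difference of the two bumps
  is the derivative of a difference of smooth steps, to which the weak-derivative identity
  applies. A small square around a point p in the interior of F has average 0, since v
  vanishes near F. Slides along a chain of squares from p to x, and two more slides from x,
  reach a bump that lies across gamma: gamma runs from x to the circle S(x, 2r), so it
  crosses one of four fixed rectangles next to x, and there v >= 1 on a neighbourhood of
  gamma, so this average is at least a fixed mass Q > 0. This gives Q <= integral |G| h for
  a weight h that depends on neither gamma nor v, and by AM-GM the Dirichlet integral of v
  is at least Q^2 / (integral h^2 + 1).
*)
theory Submission
  imports Defs "HOL-Computational_Algebra.Polynomial"
begin

subsection \<open>Smooth functions of one real variable\<close>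

fun real_Cn :: "nat \<Rightarrow> (real \<Rightarrow> real) \<Rightarrow> bool" where
  "real_Cn 0 f = True"
| "real_Cn (Suc n) f = (\<exists>f'. (\<forall>x. (f has_real_derivative f' x) (at x)) \<and> real_Cn n f')"

definition real_smooth :: "(real \<Rightarrow> real) \<Rightarrow> bool" where
  "real_smooth f \<longleftrightarrow> (\<forall>n. real_Cn n f)"

lemma real_Cn_SucD: "real_Cn (Suc n) f \<Longrightarrow> real_Cn n f"
proof (induction n arbitrary: f)
  case (Suc n)
  then obtain f' where "\<forall>x. (f has_real_derivative f' x) (at x)" "real_Cn (Suc n) f'" by auto
  with Suc.IH show ?case by auto
qed simp

lemma real_Cn_add: "real_Cn n f \<Longrightarrow> real_Cn n g \<Longrightarrow> real_Cn n (\<lambda>x. f x + g x)"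
proof (induction n arbitrary: f g)
  case (Suc n)
  then obtain f' g' where "\<forall>x. (f has_real_derivative f' x) (at x)" "real_Cn n f'"
    and "\<forall>x. (g has_real_derivative g' x) (at x)" "real_Cn n g'" by auto
  with Suc.IH[of f' g'] show ?case
    by (auto intro!: exI[of _ "\<lambda>x. f' x + g' x"] derivative_eq_intros)
qed simp

lemma real_Cn_cmult: "real_Cn n f \<Longrightarrow> real_Cn n (\<lambda>x. c * f x)"
proof (induction n arbitrary: f)
  case (Suc n)
  then obtain f' where "\<forall>x. (f has_real_derivative f' x) (at x)" "real_Cn n f'" by auto
  with Suc.IH[of f'] show ?case
    by (auto intro!: exI[of _ "\<lambda>x. c * f' x"] derivative_eq_intros)
qed simp

lemma real_Cn_mult: "real_Cn n f \<Longrightarrow> real_Cn n g \<Longrightarrow> real_Cn n (\<lambda>x. f x * g x)"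
proof (induction n arbitrary: f g)
  case (Suc n)
  then obtain f' g' where f: "\<forall>x. (f has_real_derivative f' x) (at x)" "real_Cn n f'"
    and g: "\<forall>x. (g has_real_derivative g' x) (at x)" "real_Cn n g'" by auto
  have "real_Cn n f" "real_Cn n g" using Suc.prems real_Cn_SucD by blast+
  then have "real_Cn n (\<lambda>x. f' x * g x + f x * g' x)"
    using real_Cn_add Suc.IH f g by blast
  with f g show ?case
    by (auto intro!: exI[of _ "\<lambda>x. f' x * g x + f x * g' x"] derivative_eq_intros)
qed simp

lemma real_Cn_affine: "real_Cn n f \<Longrightarrow> real_Cn n (\<lambda>x. f (c * x + d))"
proof (induction n arbitrary: f)
  case (Suc n)
  then obtain f' where f: "\<forall>x. (f has_real_derivative f' x) (at x)" "real_Cn n f'" by auto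
  have "((\<lambda>x. f (c * x + d)) has_real_derivative c * f' (c * x + d)) (at x)" for x
  proof -
    have "((\<lambda>x. c * x + d) has_real_derivative c) (at x)"
      by (auto intro!: derivative_eq_intros)
    from DERIV_chain2[OF f(1)[rule_format, of "c * x + d"] this] show ?thesis
      by (simp add: mult.commute)
  qed
  with Suc.IH[OF f(2)] real_Cn_cmult show ?case
    by (auto intro!: exI[of _ "\<lambda>x. c * f' (c * x + d)"])
qed simp

lemma real_smooth_add: "real_smooth f \<Longrightarrow> real_smooth g \<Longrightarrow> real_smooth (\<lambda>x. f x + g x)"
  by (simp add: real_smooth_def real_Cn_add)

lemma real_smooth_cmult: "real_smooth f \<Longrightarrow> real_smooth (\<lambda>x. c * f x)"
  by (simp add: real_smooth_def real_Cn_cmult)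

lemma real_smooth_mult: "real_smooth f \<Longrightarrow> real_smooth g \<Longrightarrow> real_smooth (\<lambda>x. f x * g x)"
  by (simp add: real_smooth_def real_Cn_mult)

lemma real_smooth_affine: "real_smooth f \<Longrightarrow> real_smooth (\<lambda>x. f (c * x + d))"
  by (simp add: real_smooth_def real_Cn_affine)

lemma real_smooth_diff: "real_smooth f \<Longrightarrow> real_smooth g \<Longrightarrow> real_smooth (\<lambda>x. f x - g x)"
  using real_smooth_add[of f "\<lambda>x. (-1) * g x"] real_smooth_cmult[of g "-1"] by simp

lemma real_smooth_deriv:
  assumes "real_smooth f"
  obtains f' where "\<And>x. (f has_real_derivative f' x) (at x)" "real_smooth f'"
proof -
  from assms obtain f' where f': "\<forall>x. (f has_real_derivative f' x) (at x)"
    by (metis real_Cn.simps(2) real_smooth_def)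
  have "real_Cn n f'" for n
  proof -
    from assms obtain g where g: "\<forall>x. (f has_real_derivative g x) (at x)" "real_Cn n g"
      by (metis real_Cn.simps(2) real_smooth_def)
    with f' have "g = f'" by (meson DERIV_unique ext)
    with g show ?thesis by simp
  qed
  with f' that show ?thesis by (auto simp: real_smooth_def)
qed

lemma real_smooth_antiderivative:
  assumes "real_smooth f'" "\<And>x. (f has_real_derivative f' x) (at x)"
  shows "real_smooth f"
  unfolding real_smooth_def
proof
  fix n show "real_Cn n f"
    using assms by (cases n) (auto simp: real_smooth_def)
qed

lemma real_smooth_continuous_on: "real_smooth f \<Longrightarrow> continuous_on A f"
  by (metis DERIV_isCont continuous_at_imp_continuous_on real_smooth_deriv)

subsection \<open>Bump functions\<close>

definition exp_inv_poly :: "real poly \<Rightarrow> real \<Rightarrow> real" where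
  "exp_inv_poly p t = (if 0 < t then poly p (inverse t) * exp (- inverse t) else 0)"

lemma poly_times_exp_neg_tendsto_0:
  fixes q :: "real poly"
  shows "((\<lambda>y. poly q y * exp (- y)) \<longlongrightarrow> 0) at_top"
proof -
  have "((\<lambda>y. \<Sum>i\<le>degree q. coeff q i * (y ^ i / exp y)) \<longlongrightarrow> (\<Sum>i\<le>degree q. coeff q i * 0)) at_top"
    by (intro tendsto_sum tendsto_mult tendsto_const tendsto_power_div_exp_0)
  moreover have "(\<Sum>i\<le>degree q. coeff q i * (y ^ i / exp y)) = poly q y * exp (- y)" for y
  proof -
    have "(\<Sum>i\<le>degree q. coeff q i * (y ^ i / exp y)) = (\<Sum>i\<le>degree q. coeff q i * y ^ i) / exp y"
      by (simp add: sum_divide_distrib)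
    also have "\<dots> = poly q y * exp (- y)" by (simp add: poly_altdef exp_minus divide_inverse)
    finally show ?thesis .
  qed
  ultimately show ?thesis by simp
qed

lemma exp_inv_poly_tendsto_0: "(exp_inv_poly p \<longlongrightarrow> 0) (at 0)"
proof (rule filterlim_split_at)
  show "(exp_inv_poly p \<longlongrightarrow> 0) (at_left 0)"
    by (rule tendsto_eventually) (auto simp: exp_inv_poly_def eventually_at_filter)
  have "((\<lambda>x. poly p (inverse x) * exp (- inverse x)) \<longlongrightarrow> 0) (at_right 0)"
    using filterlim_compose[OF poly_times_exp_neg_tendsto_0 filterlim_inverse_at_top_right] by simp
  moreover have "\<forall>\<^sub>F x in at_right 0. poly p (inverse x) * exp (- inverse x) = exp_inv_poly p x"
    using eventually_at_right_less[of 0] by eventually_elim (auto simp: exp_inv_poly_def)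
  ultimately show "(exp_inv_poly p \<longlongrightarrow> 0) (at_right 0)" by (rule Lim_transform_eventually)
qed

text \<open>The derivative of \<open>exp_inv_poly p\<close> is again of this form, which makes it smooth
  (including at \<open>0\<close>, where all derivatives vanish).\<close>

lemma exp_inv_poly_has_derivative:
  "(exp_inv_poly p has_real_derivative exp_inv_poly ([:0, 0, 1:] * (p - pderiv p)) t) (at t)"
proof -
  consider "t > 0" | "t < 0" | "t = 0" by linarith
  then show ?thesis
  proof cases
    case 1
    have "((\<lambda>t. poly p (inverse t) * exp (- inverse t)) has_real_derivative
       (poly (pderiv p) (inverse t) * (- (inverse t * inverse t)) * exp (- inverse t) +
        poly p (inverse t) * (exp (- inverse t) * (inverse t * inverse t)))) (at t)"
      using 1 by (auto intro!: derivative_eq_intros DERIV_chain2[OF poly_DERIV] simp: power2_eq_square)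
    moreover have "poly (pderiv p) (inverse t) * (- (inverse t * inverse t)) * exp (- inverse t) +
        poly p (inverse t) * (exp (- inverse t) * (inverse t * inverse t))
        = exp_inv_poly ([:0, 0, 1:] * (p - pderiv p)) t"
      using 1 by (simp add: exp_inv_poly_def algebra_simps power2_eq_square)
    moreover have "\<forall>\<^sub>F x in nhds t. poly p (inverse x) * exp (- inverse x) = exp_inv_poly p x"
      using eventually_nhds_in_open[of "{0<..}" t] 1
      by (auto simp: exp_inv_poly_def elim!: eventually_mono)
    then have "((\<lambda>t. poly p (inverse t) * exp (- inverse t)) has_real_derivative
        exp_inv_poly ([:0, 0, 1:] * (p - pderiv p)) t) (at t)
      = (exp_inv_poly p has_real_derivative exp_inv_poly ([:0, 0, 1:] * (p - pderiv p)) t) (at t)"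
      by (rule DERIV_cong_ev[OF refl _ refl])
    ultimately show ?thesis by simp
  next
    case 2
    have "\<forall>\<^sub>F x in nhds t. 0 = exp_inv_poly p x"
      using eventually_nhds_in_open[of "{..<0}" t] 2
      by (auto simp: exp_inv_poly_def elim!: eventually_mono)
    then have "((\<lambda>x. 0) has_real_derivative 0) (at t) = (exp_inv_poly p has_real_derivative 0) (at t)"
      by (rule DERIV_cong_ev[OF refl _ refl])
    with 2 show ?thesis by (simp add: exp_inv_poly_def)
  next
    case 3
    have "\<forall>\<^sub>F x in at 0. exp_inv_poly ([:0, 1:] * p) x = (exp_inv_poly p x - exp_inv_poly p 0) / (x - 0)"
      by (auto simp: exp_inv_poly_def eventually_at_filter field_simps)
    then have "((\<lambda>x. (exp_inv_poly p x - exp_inv_poly p 0) / (x - 0)) \<longlongrightarrow> 0) (at 0)"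
      by (rule Lim_transform_eventually[OF exp_inv_poly_tendsto_0])
    then have "(exp_inv_poly p has_real_derivative 0) (at 0)"
      by (simp add: has_field_derivative_iff)
    with 3 show ?thesis by (simp add: exp_inv_poly_def)
  qed
qed

lemma real_Cn_exp_inv_poly: "real_Cn n (exp_inv_poly p)"
  by (induction n arbitrary: p) (use exp_inv_poly_has_derivative in auto)

lemma real_smooth_exp_inv_poly: "real_smooth (exp_inv_poly p)"
  by (simp add: real_smooth_def real_Cn_exp_inv_poly)

definition bump01 :: "real \<Rightarrow> real" where
  "bump01 t = exp_inv_poly 1 t * exp_inv_poly 1 (1 - t)"

lemma exp_inv_poly_1: "exp_inv_poly 1 t = (if 0 < t then exp (- inverse t) else 0)"
  by (simp add: exp_inv_poly_def)

lemma real_smooth_bump01: "real_smooth bump01"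
proof -
  have "real_smooth (\<lambda>t. exp_inv_poly 1 ((-1) * t + 1))"
    by (rule real_smooth_affine[OF real_smooth_exp_inv_poly])
  then show ?thesis unfolding bump01_def using real_smooth_mult[OF real_smooth_exp_inv_poly] by simp
qed

lemma bump01_nonneg: "0 \<le> bump01 t"
  by (simp add: bump01_def exp_inv_poly_1)

lemma bump01_eq_0: "t \<le> 0 \<or> 1 \<le> t \<Longrightarrow> bump01 t = 0"
  by (auto simp: bump01_def exp_inv_poly_1)

lemma bump01_pos: "0 < t \<Longrightarrow> t < 1 \<Longrightarrow> 0 < bump01 t"
  by (simp add: bump01_def exp_inv_poly_1)

definition bump01_mass :: real where
  "bump01_mass = integral {-1..1} bump01"

lemma bump01_mass_pos: "0 < bump01_mass"
proof -
  have c: "continuous_on {-1..1} bump01" by (rule real_smooth_continuous_on[OF real_smooth_bump01])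
  have i: "(bump01 has_integral bump01_mass) {-1..1}"
    unfolding bump01_mass_def using integrable_continuous_real[OF c] by (simp add: integrable_integral)
  have "bump01 (1/2) \<noteq> 0" using bump01_pos[of "1/2"] by simp
  then have "bump01_mass \<noteq> 0"
    using has_integral_0_cbox_imp_0[of "-1" 1 bump01 "1/2"] c i bump01_nonneg by auto
  moreover have "0 \<le> bump01_mass" unfolding bump01_mass_def
    by (rule integral_nonneg[OF integrable_continuous_real[OF c]]) (simp add: bump01_nonneg)
  ultimately show ?thesis by simp
qed

definition smooth_step :: "real \<Rightarrow> real" where
  "smooth_step u = integral {-1..u} bump01 / bump01_mass"

lemma integral_bump01_nonpos:
  assumes "u \<le> 0" shows "integral {-1..u} bump01 = 0"
proof -
  have "integral {-1..u} bump01 = integral {-1..u} (\<lambda>x. 0)"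
    by (rule integral_cong) (use assms bump01_eq_0 in auto)
  then show ?thesis by simp
qed

lemma smooth_step_has_derivative: "(smooth_step has_real_derivative bump01 u / bump01_mass) (at u)"
proof (cases "u > -1/2")
  case True
  have c: "continuous_on {-1..u+1} bump01" by (rule real_smooth_continuous_on[OF real_smooth_bump01])
  have "((\<lambda>x. integral {-1..x} bump01) has_real_derivative bump01 u) (at u within {-1..u+1})"
    using True by (intro integral_has_real_derivative[OF c]) auto
  then have "((\<lambda>x. integral {-1..x} bump01) has_real_derivative bump01 u) (at u within {-1<..<u+1})"
    by (rule has_field_derivative_subset) auto
  then have "((\<lambda>x. integral {-1..x} bump01) has_real_derivative bump01 u) (at u)"
    using True by (subst (asm) at_within_open) auto
  then show ?thesis
    unfolding smooth_step_def using bump01_mass_pos by (auto intro!: derivative_eq_intros)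
next
  case False
  have "\<forall>\<^sub>F x in nhds u. 0 = smooth_step x"
    using eventually_nhds_in_open[of "{..<0}" u] False
    by (auto simp: smooth_step_def integral_bump01_nonpos elim!: eventually_mono)
  then have "((\<lambda>x. 0) has_real_derivative 0) (at u) = (smooth_step has_real_derivative 0) (at u)"
    by (rule DERIV_cong_ev[OF refl _ refl])
  with False bump01_eq_0[of u] show ?thesis by simp
qed

lemma real_smooth_smooth_step: "real_smooth smooth_step"
proof (rule real_smooth_antiderivative[OF _ smooth_step_has_derivative])
  have "real_smooth (\<lambda>u. inverse bump01_mass * bump01 u)"
    by (rule real_smooth_cmult[OF real_smooth_bump01])
  then show "real_smooth (\<lambda>u. bump01 u / bump01_mass)"
    by (simp add: divide_inverse mult.commute)
qed

lemma smooth_step_eq_0: "u \<le> 0 \<Longrightarrow> smooth_step u = 0"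
  by (simp add: smooth_step_def integral_bump01_nonpos)

lemma smooth_step_eq_1:
  assumes "1 \<le> u" shows "smooth_step u = 1"
proof -
  have c: "continuous_on {-1..u} bump01" by (rule real_smooth_continuous_on[OF real_smooth_bump01])
  have "integral {-1..1} bump01 + integral {1..u} bump01 = integral {-1..u} bump01"
    using assms by (intro Henstock_Kurzweil_Integration.integral_combine integrable_continuous_real[OF c]) auto
  moreover have "integral {1..u} bump01 = integral {1..u} (\<lambda>x. 0)"
    by (rule integral_cong) (use bump01_eq_0 in auto)
  ultimately show ?thesis using bump01_mass_pos by (simp add: smooth_step_def bump01_mass_def)
qed

lemma smooth_step_mono: "u \<le> u' \<Longrightarrow> smooth_step u \<le> smooth_step u'"
  by (rule DERIV_nonneg_imp_nondecreasing[of u u' smooth_step])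
    (use smooth_step_has_derivative bump01_mass_pos bump01_nonneg in \<open>auto intro!: divide_nonneg_pos\<close>)

lemma smooth_step_bounds: "0 \<le> smooth_step u \<and> smooth_step u \<le> 1"
proof -
  have "smooth_step (min u 0) \<le> smooth_step u" "smooth_step u \<le> smooth_step (max u 1)"
    by (auto intro!: smooth_step_mono)
  then show ?thesis using smooth_step_eq_0[of "min u 0"] smooth_step_eq_1[of "max u 1"] by simp
qed

definition step_on :: "real \<Rightarrow> real \<Rightarrow> real \<Rightarrow> real" where
  "step_on c w t = smooth_step ((t - c) / w)"

definition bump_on :: "real \<Rightarrow> real \<Rightarrow> real \<Rightarrow> real" where
  "bump_on c w t = bump01 ((t - c) / w) / (bump01_mass * w)"

lemma step_on_has_derivative:
  assumes "0 < w" shows "(step_on c w has_real_derivative bump_on c w t) (at t)"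
proof -
  have "((\<lambda>t. (t - c) / w) has_real_derivative 1 / w) (at t)"
    using assms by (auto intro!: derivative_eq_intros)
  from DERIV_chain2[OF smooth_step_has_derivative this] show ?thesis
    unfolding step_on_def bump_on_def using assms by simp
qed

lemma real_smooth_step_on: "real_smooth (step_on c w)"
proof -
  have "(\<lambda>t. smooth_step ((1 / w) * t + (- c / w))) = step_on c w"
    by (auto simp: step_on_def diff_divide_distrib)
  then show ?thesis using real_smooth_affine[OF real_smooth_smooth_step] by metis
qed

lemma real_smooth_bump_on: "real_smooth (bump_on c w)"
proof -
  have "(\<lambda>t. inverse (bump01_mass * w) * bump01 ((1 / w) * t + (- c / w))) = bump_on c w"
    by (simp add: fun_eq_iff bump_on_def diff_divide_distrib divide_inverse mult.commute right_diff_distrib)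
  then show ?thesis using real_smooth_cmult[OF real_smooth_affine[OF real_smooth_bump01]] by metis
qed

lemma bump_on_nonneg: "0 < w \<Longrightarrow> 0 \<le> bump_on c w t"
  using bump01_mass_pos bump01_nonneg by (simp add: bump_on_def)

lemma bump_on_pos: "0 < w \<Longrightarrow> c < t \<Longrightarrow> t < c + w \<Longrightarrow> 0 < bump_on c w t"
  using bump01_mass_pos by (auto simp: bump_on_def intro!: bump01_pos divide_pos_pos simp: field_simps)

lemma bump_on_support: "0 < w \<Longrightarrow> bump_on c w t \<noteq> 0 \<Longrightarrow> c \<le> t \<and> t \<le> c + w"
  by (rule ccontr) (auto simp: bump_on_def field_simps intro!: bump01_eq_0)

lemma bump_on_rescale: "0 < e \<Longrightarrow> bump_on t e (e * u + t) = bump_on 0 1 u / e"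
  by (simp add: bump_on_def)

lemma step_on_eq_0: "0 < w \<Longrightarrow> t \<le> c \<Longrightarrow> step_on c w t = 0"
  by (auto simp: step_on_def intro!: smooth_step_eq_0 simp: field_simps)

lemma step_on_eq_1: "0 < w \<Longrightarrow> c + w \<le> t \<Longrightarrow> step_on c w t = 1"
  by (auto simp: step_on_def intro!: smooth_step_eq_1 simp: field_simps)

lemma step_on_bounds: "0 \<le> step_on c w t" "step_on c w t \<le> 1"
  using smooth_step_bounds by (auto simp: step_on_def)

lemma step_on_antimono: "0 < w \<Longrightarrow> c \<le> c' \<Longrightarrow> step_on c' w t \<le> step_on c w t"
  unfolding step_on_def by (rule smooth_step_mono) (simp add: divide_right_mono)

lemma step_on_diff_support:
  assumes "0 < w" "0 < w'" "step_on c w t - step_on c' w' t \<noteq> 0"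
  shows "min c c' \<le> t \<and> t \<le> max (c + w) (c' + w')"
proof (rule ccontr)
  assume "\<not> ?thesis"
  then consider "t < min c c'" | "max (c + w) (c' + w') < t" by linarith
  then show False
    by cases (use assms step_on_eq_0[of w t c] step_on_eq_0[of w' t c']
        step_on_eq_1[of w c t] step_on_eq_1[of w' c' t] in auto)
qed

definition trapezoid :: "real \<Rightarrow> real \<Rightarrow> real \<Rightarrow> real \<Rightarrow> real" where
  "trapezoid a b e t = max 0 (min 1 (min ((t - a) / e + 1) ((b - t) / e + 1)))"

lemma continuous_on_trapezoid: "e \<noteq> 0 \<Longrightarrow> continuous_on A (trapezoid a b e)"
  unfolding trapezoid_def by (intro continuous_intros) auto

lemma trapezoid_nonneg: "0 \<le> trapezoid a b e t"
  by (simp add: trapezoid_def)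

lemma trapezoid_eq_1: "0 < e \<Longrightarrow> a \<le> t \<Longrightarrow> t \<le> b \<Longrightarrow> trapezoid a b e t = 1"
  by (auto simp: trapezoid_def field_simps)

lemma trapezoid_support:
  assumes "0 < e" "trapezoid a b e t \<noteq> 0" shows "a - e \<le> t \<and> t \<le> b + e"
proof (rule ccontr)
  assume "\<not> ?thesis"
  then have "(t - a) / e + 1 \<le> 0 \<or> (b - t) / e + 1 \<le> 0"
    using assms(1) by (auto simp: field_simps)
  with assms(2) show False unfolding trapezoid_def by linarith
qed

subsection \<open>Tensor products on the plane\<close>

definition tensor :: "2 \<Rightarrow> 2 \<Rightarrow> (real \<Rightarrow> real) \<Rightarrow> (real \<Rightarrow> real) \<Rightarrow> R2 \<Rightarrow> real" where
  "tensor i j a b x = a (x$i) * b (x$j)"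

definition coords :: "2 \<Rightarrow> real \<Rightarrow> real \<Rightarrow> R2" where
  "coords i p q = (\<chi> k. if k = i then p else q)"

lemma index_2_cases: "(i::2) \<noteq> j \<Longrightarrow> k = i \<or> k = j"
  using exhaust_2[of i] exhaust_2[of j] exhaust_2[of k] by auto

lemma norm_le_coordinate_sum: "i \<noteq> j \<Longrightarrow> norm (y :: R2) \<le> \<bar>y$i\<bar> + \<bar>y$j\<bar>"
  using norm_le_l1_cart[of y] index_2_cases[of i j 1] index_2_cases[of i j 2]
  by (auto simp: UNIV_2)

lemma dist_le_coordinate_sum: "i \<noteq> j \<Longrightarrow> dist (u :: R2) y \<le> \<bar>u$i - y$i\<bar> + \<bar>u$j - y$j\<bar>"
  using norm_le_coordinate_sum[of i j "u - y"] by (simp add: dist_norm)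

lemma mem_cbox_coords:
  assumes "i \<noteq> j"
  shows "x \<in> cbox (coords i p q) (coords i p' q') \<longleftrightarrow> p \<le> x$i \<and> x$i \<le> p' \<and> q \<le> x$j \<and> x$j \<le> q'"
proof -
  have "(\<forall>k. Q k) \<longleftrightarrow> Q i \<and> Q j" for Q using index_2_cases[OF assms] by metis
  then show ?thesis unfolding mem_box_cart coords_def using assms by auto
qed

lemma tensor_support:
  assumes "i \<noteq> j" "\<And>t. a t \<noteq> 0 \<Longrightarrow> p \<le> t \<and> t \<le> p'" "\<And>t. b t \<noteq> 0 \<Longrightarrow> q \<le> t \<and> t \<le> q'"
  shows "tensor i j a b x \<noteq> 0 \<Longrightarrow> x \<in> cbox (coords i p q) (coords i p' q')"
  using assms by (auto simp: tensor_def mem_cbox_coords)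

lemma tensor_swap: "tensor j i b a = tensor i j a b"
  by (simp add: fun_eq_iff tensor_def mult.commute)

lemma continuous_on_tensor:
  assumes "continuous_on UNIV a" "continuous_on UNIV b"
  shows "continuous_on UNIV (tensor i j a b)"
proof -
  have "continuous_on UNIV (\<lambda>x::R2. f (x$k))" if "continuous_on UNIV f" for f k
    using continuous_on_compose2[OF that continuous_on_component[OF continuous_on_id]] by simp
  with assms show ?thesis unfolding tensor_def by (intro continuous_on_mult)
qed

lemma has_derivative_coordinate:
  assumes "(a has_real_derivative a' (x$i)) (at (x$i))"
  shows "((\<lambda>x::R2. a (x$i)) has_derivative (\<lambda>h. h$i * a' (x$i))) (at x)"
proof -
  have "(a has_derivative (\<lambda>h. h * a' (x$i))) (at (x$i))"
  proof -
    have "(\<lambda>h. h * a' (x$i)) = (\<lambda>h. a' (x$i) * h)" by (simp add: mult.commute)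
    then show ?thesis using assms by (simp add: has_field_derivative_def)
  qed
  from has_derivative_compose[OF bounded_linear_imp_has_derivative[OF bounded_linear_vec_nth] this]
  show ?thesis by (simp add: o_def)
qed

lemma tensor_has_derivative:
  assumes "\<And>t. (a has_real_derivative a' t) (at t)" "\<And>t. (b has_real_derivative b' t) (at t)"
  shows "(tensor i j a b has_derivative (\<lambda>h. h$i * a' (x$i) * b (x$j) + a (x$i) * (h$j * b' (x$j)))) (at x)"
  unfolding tensor_def
  using has_derivative_mult[OF has_derivative_coordinate[of a a' x i] has_derivative_coordinate[of b b' x j]] assms
  by (simp add: algebra_simps)

lemma Ck_add: "Ck k f \<Longrightarrow> Ck k g \<Longrightarrow> Ck k (\<lambda>x. f x + g x)"
proof (induction k arbitrary: f g)
  case (Suc k)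
  then have df: "(f has_derivative frechet_derivative f (at x)) (at x)"
    and dg: "(g has_derivative frechet_derivative g (at x)) (at x)" for x
    by (simp_all flip: frechet_derivative_works)
  have "frechet_derivative (\<lambda>x. f x + g x) (at x)
      = (\<lambda>h. frechet_derivative f (at x) h + frechet_derivative g (at x) h)" for x
    using frechet_derivative_at[OF has_derivative_add[OF df dg]] by simp
  moreover have "(\<lambda>x. f x + g x) differentiable at x" for x
    using has_derivative_add[OF df dg] differentiable_def by blast
  ultimately show ?case using Suc by simp
qed (auto intro!: continuous_intros)

lemma Ck_tensor: "real_smooth a \<Longrightarrow> real_smooth b \<Longrightarrow> Ck k (tensor i j a b)"
proof (induction k arbitrary: a b)
  case 0
  then show ?case by (simp add: continuous_on_tensor real_smooth_continuous_on)
next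
  case (Suc k)
  obtain a' where a': "\<And>t. (a has_real_derivative a' t) (at t)" "real_smooth a'"
    using real_smooth_deriv[OF Suc.prems(1)] by blast
  obtain b' where b': "\<And>t. (b has_real_derivative b' t) (at t)" "real_smooth b'"
    using real_smooth_deriv[OF Suc.prems(2)] by blast
  have "frechet_derivative (tensor i j a b) (at x) e
      = tensor i j (\<lambda>t. e$i * a' t) b x + tensor i j a (\<lambda>t. e$j * b' t) x" for x e
    using frechet_derivative_at[OF tensor_has_derivative[OF a'(1) b'(1), of i j x], symmetric]
    by (simp add: tensor_def algebra_simps)
  moreover have "Ck k (\<lambda>x. tensor i j (\<lambda>t. e$i * a' t) b x + tensor i j a (\<lambda>t. e$j * b' t) x)" for e
    by (intro Ck_add Suc.IH real_smooth_cmult a'(2) b'(2) Suc.prems)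
  moreover have "tensor i j a b differentiable at x" for x
    using tensor_has_derivative[OF a'(1) b'(1)] differentiable_def by blast
  ultimately show ?case by simp
qed

lemma test_fun_tensor:
  assumes "i \<noteq> j" "real_smooth a" "real_smooth b"
    and "\<And>t. a t \<noteq> 0 \<Longrightarrow> p \<le> t \<and> t \<le> p'" "\<And>t. b t \<noteq> 0 \<Longrightarrow> q \<le> t \<and> t \<le> q'"
    and "cbox (coords i p q) (coords i p' q') \<subseteq> \<Omega>"
  shows "test_fun \<Omega> (tensor i j a b)"
proof -
  have c: "closure {x. tensor i j a b x \<noteq> 0} \<subseteq> cbox (coords i p q) (coords i p' q')"
    using tensor_support[OF assms(1,4,5)] by (intro closure_minimal) auto
  then have "compact (closure {x. tensor i j a b x \<noteq> 0})"
    unfolding compact_closure by (meson bounded_cbox bounded_subset closure_subset order_trans)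
  with c assms(6) Ck_tensor[OF assms(2,3)] show ?thesis
    unfolding test_fun_def smooth_fun_def by auto
qed

subsection \<open>Continuous functions with compact support\<close>

definition Cc :: "R2 set \<Rightarrow> (R2 \<Rightarrow> real) \<Rightarrow> bool" where
  "Cc \<Omega> h \<longleftrightarrow> continuous_on UNIV h \<and> (\<exists>K. compact K \<and> K \<subseteq> \<Omega> \<and> (\<forall>x. h x \<noteq> 0 \<longrightarrow> x \<in> K))"

definition weight :: "R2 set \<Rightarrow> (R2 \<Rightarrow> real) \<Rightarrow> bool" where
  "weight \<Omega> h \<longleftrightarrow> Cc \<Omega> h \<and> (\<forall>x. 0 \<le> h x)"

lemma Cc_add: assumes "Cc \<Omega> f" "Cc \<Omega> g" shows "Cc \<Omega> (\<lambda>x. f x + g x)"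
proof -
  obtain K L where K: "compact K" "K \<subseteq> \<Omega>" "\<forall>x. f x \<noteq> 0 \<longrightarrow> x \<in> K"
    and L: "compact L" "L \<subseteq> \<Omega>" "\<forall>x. g x \<noteq> 0 \<longrightarrow> x \<in> L"
    using assms by (auto simp: Cc_def)
  have "\<forall>x. f x + g x \<noteq> 0 \<longrightarrow> x \<in> K \<union> L" using K(3) L(3) by force
  with K L assms show ?thesis unfolding Cc_def
    by (intro conjI continuous_on_add exI[of _ "K \<union> L"]) (auto simp: Cc_def)
qed

lemma weight_add: "weight \<Omega> f \<Longrightarrow> weight \<Omega> g \<Longrightarrow> weight \<Omega> (\<lambda>x. f x + g x)"
  by (simp add: weight_def Cc_add add_nonneg_nonneg)

lemma weight_zero: "weight \<Omega> (\<lambda>x. 0)"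
  unfolding weight_def Cc_def by (auto intro: exI[of _ "{}"])

lemma weight_sum: "(\<And>k. k \<in> A \<Longrightarrow> weight \<Omega> (h k)) \<Longrightarrow> weight \<Omega> (\<lambda>x. \<Sum>k\<in>A. h k x)"
  by (induction A rule: infinite_finite_induct) (simp_all add: weight_zero weight_add)

lemma Cc_tensor:
  assumes "i \<noteq> j" "continuous_on UNIV a" "continuous_on UNIV b"
    and "\<And>t. a t \<noteq> 0 \<Longrightarrow> p \<le> t \<and> t \<le> p'" "\<And>t. b t \<noteq> 0 \<Longrightarrow> q \<le> t \<and> t \<le> q'"
    and "cbox (coords i p q) (coords i p' q') \<subseteq> \<Omega>"
  shows "Cc \<Omega> (tensor i j a b)"
  unfolding Cc_def
  using continuous_on_tensor[OF assms(2,3)] tensor_support[OF assms(1,4,5)] assms(6) compact_cbox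
  by (intro conjI exI[of _ "cbox (coords i p q) (coords i p' q')"]) auto

lemma weight_tensor:
  assumes "i \<noteq> j" "continuous_on UNIV a" "continuous_on UNIV b" "\<And>t. 0 \<le> a t" "\<And>t. 0 \<le> b t"
    and "\<And>t. a t \<noteq> 0 \<Longrightarrow> p \<le> t \<and> t \<le> p'" "\<And>t. b t \<noteq> 0 \<Longrightarrow> q \<le> t \<and> t \<le> q'"
    and "cbox (coords i p q) (coords i p' q') \<subseteq> \<Omega>"
  shows "weight \<Omega> (tensor i j a b)"
  using Cc_tensor[OF assms(1-3,6-8)] assms(4,5) by (simp add: weight_def tensor_def)

lemma Cc_integrable_on:
  assumes "Cc \<Omega> f" shows "f integrable_on \<Omega>" "integral \<Omega> f = integral UNIV f"
proof -
  obtain K where K: "compact K" "K \<subseteq> \<Omega>" "\<forall>x. f x \<noteq> 0 \<longrightarrow> x \<in> K" and c: "continuous_on UNIV f"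
    using assms by (auto simp: Cc_def)
  obtain a where "K \<subseteq> cbox (-a) a"
    using bounded_subset_cbox_symmetric[OF compact_imp_bounded[OF K(1)]] by blast
  then have "f integrable_on UNIV"
    using integrable_on_superset[OF integrable_continuous[OF continuous_on_subset[OF c]]] K(3)
    by (metis in_mono subset_UNIV)
  moreover have "(\<lambda>x. if x \<in> \<Omega> then f x else 0) = f" using K by (auto simp: fun_eq_iff)
  ultimately show "f integrable_on \<Omega>" "integral \<Omega> f = integral UNIV f"
    by (metis integrable_restrict_UNIV integral_restrict_UNIV)+
qed

lemma Cc_square: "Cc \<Omega> h \<Longrightarrow> Cc \<Omega> (\<lambda>x. (h x)^2)"
  unfolding Cc_def by (auto intro: continuous_on_power)

lemma absolutely_integrable_times_continuous_compact:
  fixes f w :: "R2 \<Rightarrow> real"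
  assumes "compact K" "continuous_on K w" "f absolutely_integrable_on K"
  shows "(\<lambda>x. f x * w x) absolutely_integrable_on K"
proof -
  have Kl: "K \<in> sets lebesgue" using lmeasurable_compact[OF assms(1)] by (simp add: fmeasurableD)
  have "(\<lambda>x. w x * f x) absolutely_integrable_on K"
    by (rule absolutely_integrable_bounded_measurable_product[OF bilinear_times
          continuous_imp_measurable_on_sets_lebesgue[OF assms(2) Kl] Kl
          compact_imp_bounded[OF compact_continuous_image[OF assms(2,1)]] assms(3)])
  then show ?thesis by (simp add: mult.commute)
qed

lemma absolutely_integrable_continuous_compact:
  fixes w :: "R2 \<Rightarrow> real"
  assumes "compact K" "continuous_on K w"
  shows "w absolutely_integrable_on K"
  using absolutely_integrable_times_continuous_compact[OF assms absolutely_integrable_on_const[of K 1]]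
    lmeasurable_compact[OF assms(1)] by simp

lemma integrable_times_Cc:
  fixes f :: "R2 \<Rightarrow> real"
  assumes f: "\<And>K. compact K \<Longrightarrow> K \<subseteq> \<Omega> \<Longrightarrow> f absolutely_integrable_on K" and w: "Cc \<Omega> w"
  shows "(\<lambda>x. f x * w x) integrable_on \<Omega>"
proof -
  obtain K where K: "compact K" "K \<subseteq> \<Omega>" "\<forall>x. w x \<noteq> 0 \<longrightarrow> x \<in> K"
    and wc: "continuous_on K w" using w by (auto simp: Cc_def intro: continuous_on_subset)
  have "(\<lambda>x. f x * w x) integrable_on K"
    using absolutely_integrable_times_continuous_compact[OF K(1) wc f[OF K(1,2)]]
    by (simp add: absolutely_integrable_on_def)
  then show ?thesis by (rule integrable_on_superset) (use K in auto)
qed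

lemma continuous_times_Cc_integrable:
  assumes v: "continuous_on \<Omega> v" and w: "Cc \<Omega> w"
  shows "(\<lambda>x. v x * w x) integrable_on \<Omega>"
  by (rule integrable_times_Cc[OF absolutely_integrable_continuous_compact w])
    (use continuous_on_subset[OF v] in auto)

lemma admissible_gradient_integrable:
  assumes "cap_admissible F0 F1 \<Omega> v G" "compact K" "K \<subseteq> \<Omega>"
  shows "(\<lambda>x. G x \<bullet> e) absolutely_integrable_on K" "(\<lambda>x. norm (G x)) absolutely_integrable_on K"
proof -
  have "G absolutely_integrable_on K"
    using assms unfolding cap_admissible_def weak_gradient_def by blast
  then show "(\<lambda>x. G x \<bullet> e) absolutely_integrable_on K" "(\<lambda>x. norm (G x)) absolutely_integrable_on K"
    using absolutely_integrable_component absolutely_integrable_norm[unfolded o_def] by blast+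
qed

lemma admissible_times_Cc_integrable:
  assumes "cap_admissible F0 F1 \<Omega> v G" "Cc \<Omega> w"
  shows "(\<lambda>x. v x * w x) integrable_on \<Omega>"
    and "(\<lambda>x. (G x \<bullet> e) * w x) integrable_on \<Omega>"
    and "(\<lambda>x. norm (G x) * w x) integrable_on \<Omega>"
  using continuous_times_Cc_integrable[OF _ assms(2)] integrable_times_Cc[OF _ assms(2)]
    admissible_gradient_integrable[OF assms(1)] assms(1)
  by (auto simp: cap_admissible_def)

lemma flux_add:
  assumes "cap_admissible F0 F1 \<Omega> v G" "Cc \<Omega> h1" "Cc \<Omega> h2"
  shows "integral \<Omega> (\<lambda>x. norm (G x) * (h1 x + h2 x))
       = integral \<Omega> (\<lambda>x. norm (G x) * h1 x) + integral \<Omega> (\<lambda>x. norm (G x) * h2 x)"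
  using integral_add[OF admissible_times_Cc_integrable(3)[OF assms(1,2)]
      admissible_times_Cc_integrable(3)[OF assms(1,3)]]
  by (simp add: distrib_left)

lemma flux_add_le:
  assumes adm: "cap_admissible F0 F1 \<Omega> v G" and "Cc \<Omega> h1" "Cc \<Omega> h2" "Cc \<Omega> h"
    and "\<And>x. h1 x + h2 x \<le> h x"
  shows "integral \<Omega> (\<lambda>x. norm (G x) * h1 x) + integral \<Omega> (\<lambda>x. norm (G x) * h2 x)
       \<le> integral \<Omega> (\<lambda>x. norm (G x) * h x)"
proof -
  have "integral \<Omega> (\<lambda>x. norm (G x) * (h1 x + h2 x)) \<le> integral \<Omega> (\<lambda>x. norm (G x) * h x)"
    by (rule integral_le[OF admissible_times_Cc_integrable(3)[OF adm Cc_add]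
          admissible_times_Cc_integrable(3)[OF adm]]) (use assms in \<open>simp_all add: mult_left_mono\<close>)
  then show ?thesis using flux_add[OF adm assms(2,3)] by simp
qed

subsection \<open>Moving a bump against the weak gradient\<close>

lemma weak_gradient_tensor:
  assumes "weak_gradient \<Omega> v G" "i \<noteq> j"
    and \<phi>: "real_smooth \<phi>" "\<And>t. (\<phi> has_real_derivative \<phi>' t) (at t)" "\<And>t. \<phi> t \<noteq> 0 \<Longrightarrow> p \<le> t \<and> t \<le> p'"
    and b: "real_smooth b" "\<And>t. b t \<noteq> 0 \<Longrightarrow> q \<le> t \<and> t \<le> q'"
    and box: "cbox (coords i p q) (coords i p' q') \<subseteq> \<Omega>"
  shows "integral \<Omega> (\<lambda>x. v x * tensor i j \<phi>' b x) = - integral \<Omega> (\<lambda>x. (G x \<bullet> axis i 1) * tensor i j \<phi> b x)"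
proof -
  have "test_fun \<Omega> (tensor i j \<phi> b)"
    by (rule test_fun_tensor[OF assms(2) \<phi>(1) b(1) \<phi>(3) b(2) box])
  then have "integral \<Omega> (\<lambda>x. v x * frechet_derivative (tensor i j \<phi> b) (at x) (axis i 1))
      = - integral \<Omega> (\<lambda>x. (G x \<bullet> axis i 1) * tensor i j \<phi> b x)"
    using assms(1) unfolding weak_gradient_def by simp
  moreover obtain b' where "\<And>t. (b has_real_derivative b' t) (at t)"
    using real_smooth_deriv[OF b(1)] by blast
  then have "frechet_derivative (tensor i j \<phi> b) (at x) (axis i 1) = tensor i j \<phi>' b x" for x
    using frechet_derivative_at[OF tensor_has_derivative[OF \<phi>(2), of b b' i j x], symmetric] assms(2)
    by (simp add: tensor_def axis_def)
  ultimately show ?thesis by simp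
qed

lemma abs_step_on_diff_le:
  assumes w: "0 < w" "0 < w'" and \<eta>: "\<And>t. 0 \<le> \<eta> t"
    "\<And>t. min c c' \<le> t \<Longrightarrow> t \<le> max (c + w) (c' + w') \<Longrightarrow> 1 \<le> \<eta> t"
  shows "\<bar>step_on c w t - step_on c' w' t\<bar> \<le> \<eta> t"
proof (cases "step_on c w t - step_on c' w' t = 0")
  case False
  then have "1 \<le> \<eta> t" using step_on_diff_support[OF w] \<eta>(2) by blast
  moreover have "\<bar>step_on c w t - step_on c' w' t\<bar> \<le> 1"
    using step_on_bounds[of c w t] step_on_bounds[of c' w' t] by auto
  ultimately show ?thesis by simp
qed (simp add: \<eta>(1))

lemma abs_integral_gradient_tensor_le:
  assumes adm: "cap_admissible F0 F1 \<Omega> v G"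
    and Cc: "Cc \<Omega> (tensor i j \<phi> b)" "Cc \<Omega> (tensor i j \<eta> b)" and "\<And>t. \<bar>\<phi> t\<bar> \<le> \<eta> t" "\<And>t. 0 \<le> b t"
  shows "\<bar>integral \<Omega> (\<lambda>x. (G x \<bullet> axis i 1) * tensor i j \<phi> b x)\<bar> \<le> integral \<Omega> (\<lambda>x. norm (G x) * tensor i j \<eta> b x)"
proof -
  have "norm (integral \<Omega> (\<lambda>x. (G x \<bullet> axis i 1) * tensor i j \<phi> b x))
      \<le> integral \<Omega> (\<lambda>x. norm (G x) * tensor i j \<eta> b x)"
  proof (rule integral_norm_bound_integral[OF admissible_times_Cc_integrable(2)[OF adm Cc(1)]
        admissible_times_Cc_integrable(3)[OF adm Cc(2)]])
    fix x
    have "\<bar>G x \<bullet> axis i 1\<bar> \<le> norm (G x)" by (rule Basis_le_norm) simp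
    moreover have "\<bar>tensor i j \<phi> b x\<bar> \<le> tensor i j \<eta> b x"
      using assms(4)[of "x$i"] assms(5)[of "x$j"] by (simp add: tensor_def abs_mult mult_right_mono)
    ultimately show "norm ((G x \<bullet> axis i 1) * tensor i j \<phi> b x) \<le> norm (G x) * tensor i j \<eta> b x"
      by (simp add: abs_mult mult_mono)
  qed
  then show ?thesis by simp
qed

text \<open>Replacing the bump \<open>bump_on c w\<close> in direction \<open>i\<close> by \<open>bump_on c' w'\<close> changes the
  average of \<open>v\<close> by at most the flux of \<open>G\<close> through the region swept, because the
  difference of the two bumps is the derivative of the difference \<open>\<phi>\<close> of two steps, and
  \<open>\<bar>\<phi>\<bar> \<le> \<eta>\<close>.\<close>

lemma slide_estimate:
  assumes adm: "cap_admissible F0 F1 \<Omega> v G" and ij: "i \<noteq> j" and w: "0 < w" "0 < w'"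
    and b: "real_smooth b" "\<And>t. 0 \<le> b t" "\<And>t. b t \<noteq> 0 \<Longrightarrow> q \<le> t \<and> t \<le> q'"
    and \<eta>: "continuous_on UNIV \<eta>" "\<And>t. 0 \<le> \<eta> t"
      "\<And>t. min c c' \<le> t \<Longrightarrow> t \<le> max (c + w) (c' + w') \<Longrightarrow> 1 \<le> \<eta> t"
      "\<And>t. \<eta> t \<noteq> 0 \<Longrightarrow> p \<le> t \<and> t \<le> p'"
    and box: "cbox (coords i p q) (coords i p' q') \<subseteq> \<Omega>"
  shows "\<bar>integral \<Omega> (\<lambda>x. v x * tensor i j (bump_on c w) b x)
          - integral \<Omega> (\<lambda>x. v x * tensor i j (bump_on c' w') b x)\<bar>
         \<le> integral \<Omega> (\<lambda>x. norm (G x) * tensor i j \<eta> b x)"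
proof -
  define \<phi> where "\<phi> t = step_on c w t - step_on c' w' t" for t
  have \<phi>_le_\<eta>: "\<bar>\<phi> t\<bar> \<le> \<eta> t" for t
    unfolding \<phi>_def by (rule abs_step_on_diff_le[OF w \<eta>(2,3)])
  have \<phi>_support: "\<phi> t \<noteq> 0 \<Longrightarrow> p \<le> t \<and> t \<le> p'" for t
    using \<phi>_le_\<eta>[of t] \<eta>(4)[of t] by linarith
  have bump_support: "bump_on c1 w1 t \<noteq> 0 \<Longrightarrow> p \<le> t \<and> t \<le> p'"
    if "(c1, w1) = (c, w) \<or> (c1, w1) = (c', w')" for c1 w1 t
  proof -
    assume "bump_on c1 w1 t \<noteq> 0"
    with that w have "min c c' \<le> t \<and> t \<le> max (c + w) (c' + w')"
      using bump_on_support by fastforce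
    then show ?thesis using \<eta>(3,4) by fastforce
  qed
  have cont: "continuous_on UNIV f" if "real_smooth f" for f
    using that by (rule real_smooth_continuous_on)
  have Cc_bump: "Cc \<Omega> (tensor i j (bump_on c1 w1) b)" if "(c1, w1) = (c, w) \<or> (c1, w1) = (c', w')" for c1 w1
    by (rule Cc_tensor[OF ij cont[OF real_smooth_bump_on] cont[OF b(1)] bump_support[OF that] b(3) box])
  have Cc_\<phi>: "Cc \<Omega> (tensor i j \<phi> b)"
    unfolding \<phi>_def
    by (rule Cc_tensor[OF ij cont[OF real_smooth_diff[OF real_smooth_step_on real_smooth_step_on]]
          cont[OF b(1)] \<phi>_support[unfolded \<phi>_def] b(3) box])
  have Cc_\<eta>: "Cc \<Omega> (tensor i j \<eta> b)" by (rule Cc_tensor[OF ij \<eta>(1) cont[OF b(1)] \<eta>(4) b(3) box])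
  have "integral \<Omega> (\<lambda>x. v x * tensor i j (bump_on c w) b x) - integral \<Omega> (\<lambda>x. v x * tensor i j (bump_on c' w') b x)
      = integral \<Omega> (\<lambda>x. v x * tensor i j (\<lambda>t. bump_on c w t - bump_on c' w' t) b x)"
    using integral_diff[OF admissible_times_Cc_integrable(1)[OF adm Cc_bump]
        admissible_times_Cc_integrable(1)[OF adm Cc_bump]]
    by (simp add: tensor_def algebra_simps)
  also have "\<dots> = - integral \<Omega> (\<lambda>x. (G x \<bullet> axis i 1) * tensor i j \<phi> b x)"
    unfolding \<phi>_def using adm
    by (intro weak_gradient_tensor[OF _ ij _ _ \<phi>_support[unfolded \<phi>_def] b(1,3) box])
      (auto simp: cap_admissible_def intro!: real_smooth_diff real_smooth_step_on
        derivative_eq_intros step_on_has_derivative w)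
  finally show ?thesis
    using abs_integral_gradient_tensor_le[OF adm Cc_\<phi> Cc_\<eta> \<phi>_le_\<eta> b(2)] by simp
qed

lemma slide_estimate_trapezoid:
  assumes adm: "cap_admissible F0 F1 \<Omega> v G" and ij: "i \<noteq> j"
    and pos: "0 < w" "0 < w'" "0 < s" "0 < e"
    and box: "\<And>y. min c c' - e \<le> y$i \<Longrightarrow> y$i \<le> max (c + w) (c' + w') + e
                   \<Longrightarrow> d \<le> y$j \<Longrightarrow> y$j \<le> d + s \<Longrightarrow> y \<in> \<Omega>"
  shows "\<bar>integral \<Omega> (\<lambda>x. v x * tensor i j (bump_on c w) (bump_on d s) x)
          - integral \<Omega> (\<lambda>x. v x * tensor i j (bump_on c' w') (bump_on d s) x)\<bar>
         \<le> integral \<Omega> (\<lambda>x. norm (G x) * tensor i j (trapezoid (min c c') (max (c + w) (c' + w')) e) (bump_on d s) x)"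
  by (rule slide_estimate[OF adm ij pos(1,2) real_smooth_bump_on bump_on_nonneg[OF pos(3)]
        bump_on_support[OF pos(3)] continuous_on_trapezoid trapezoid_nonneg _
        trapezoid_support[OF pos(4)]])
    (use pos(4) trapezoid_eq_1 box in \<open>auto simp: mem_cbox_coords[OF ij]\<close>)

lemma weight_trapezoid_bump:
  assumes ij: "i \<noteq> j" and pos: "0 < s" "0 < e"
    and box: "\<And>y. a - e \<le> y$i \<Longrightarrow> y$i \<le> b + e \<Longrightarrow> d \<le> y$j \<Longrightarrow> y$j \<le> d + s \<Longrightarrow> y \<in> \<Omega>"
  shows "weight \<Omega> (tensor i j (trapezoid a b e) (bump_on d s))"
  by (rule weight_tensor[OF ij continuous_on_trapezoid real_smooth_continuous_on[OF real_smooth_bump_on]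
        trapezoid_nonneg bump_on_nonneg[OF pos(1)] trapezoid_support[OF pos(2)] bump_on_support[OF pos(1)]])
    (use pos box in \<open>auto simp: mem_cbox_coords[OF ij]\<close>)

subsection \<open>From a flux bound to a capacity bound\<close>

lemma integral_mult_le_amgm:
  fixes f h :: "'a::euclidean_space \<Rightarrow> real"
  assumes "(\<lambda>x. f x * h x) integrable_on S" "(\<lambda>x. (f x)^2) integrable_on S" "(\<lambda>x. (h x)^2) integrable_on S"
    and "0 < l"
  shows "integral S (\<lambda>x. f x * h x) \<le> (l * integral S (\<lambda>x. (f x)^2) + integral S (\<lambda>x. (h x)^2) / l) / 2"
proof -
  have "integral S (\<lambda>x. f x * h x) \<le> integral S (\<lambda>x. (l/2) * (f x)^2 + (1/(2*l)) * (h x)^2)"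
  proof (rule integral_le[OF assms(1)])
    show "(\<lambda>x. (l/2) * (f x)^2 + (1/(2*l)) * (h x)^2) integrable_on S"
      by (intro integrable_add integrable_on_mult_right assms(2,3))
    fix x
    have "0 \<le> (l * f x - h x)^2" by simp
    then have "2 * l * (f x * h x) \<le> l * (l * (f x)^2) + (h x)^2"
      by (simp add: power2_eq_square algebra_simps)
    then show "f x * h x \<le> (l/2) * (f x)^2 + (1/(2*l)) * (h x)^2"
      using assms(4) by (simp add: field_simps)
  qed
  also have "\<dots> = (l * integral S (\<lambda>x. (f x)^2) + integral S (\<lambda>x. (h x)^2) / l) / 2"
    using assms(2-4) by (simp add: integral_add integrable_on_mult_right field_simps)
  finally show ?thesis .
qed

lemma cap_greater_than_flux_bound:
  assumes Q: "0 < Q" and h: "weight \<Omega> h"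
    and flux: "\<And>v G. cap_admissible F0 F1 \<Omega> v G \<Longrightarrow> Q \<le> integral \<Omega> (\<lambda>x. norm (G x) * h x)"
  shows "ereal (Q^2 / (2 * (integral \<Omega> (\<lambda>x. (h x)^2) + 1))) < cap F0 F1 \<Omega>"
proof -
  define H where "H = integral \<Omega> (\<lambda>x. (h x)^2)"
  have h2: "(\<lambda>x. (h x)^2) integrable_on \<Omega>"
    using Cc_integrable_on(1)[OF Cc_square] h by (simp add: weight_def)
  have H0: "0 \<le> H" unfolding H_def by (rule integral_nonneg[OF h2]) simp
  have "Q^2 / (H + 1) \<le> integral \<Omega> (\<lambda>x. norm (G x)^2)" if adm: "cap_admissible F0 F1 \<Omega> v G" for v G
  proof -
    define E where "E = integral \<Omega> (\<lambda>x. norm (G x)^2)"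
    have "Q \<le> ((H + 1) / Q * E + H / ((H + 1) / Q)) / 2"
      using flux[OF adm] integral_mult_le_amgm[of "\<lambda>x. norm (G x)" h \<Omega> "(H + 1) / Q"]
        admissible_times_Cc_integrable(3)[OF adm] h h2 adm Q H0
      by (fastforce simp: E_def H_def weight_def cap_admissible_def)
    then have "2 * Q \<le> (H + 1) / Q * E + H * Q / (H + 1)"
      by (simp add: field_simps)
    moreover have "H * Q / (H + 1) \<le> Q" using H0 Q by (simp add: field_simps)
    ultimately have "Q \<le> (H + 1) / Q * E" by simp
    then have "Q * Q \<le> (H + 1) * E" using Q by (simp add: field_simps)
    then show ?thesis using H0 by (simp add: E_def field_simps power2_eq_square)
  qed
  then have "ereal (Q^2 / (H + 1)) \<le> cap F0 F1 \<Omega>"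
    unfolding cap_def by (intro Inf_greatest) auto
  moreover have "Q^2 / (2 * (H + 1)) < Q^2 / (H + 1)"
    using Q H0 by (simp add: field_simps add_pos_nonneg)
  ultimately have "ereal (Q^2 / (2 * (H + 1))) < cap F0 F1 \<Omega>"
    using less_le_trans[of "ereal (Q^2 / (2 * (H + 1)))" "ereal (Q^2 / (H + 1))"] by simp
  then show ?thesis unfolding H_def .
qed

subsection \<open>Moving a small square along a chain\<close>

text \<open>\<open>square_bump s y\<close> is a smooth bump of unit mass on the square \<open>y + [0, s]\<^sup>2\<close>, so
  \<open>\<integral> v \<cdot> square_bump s y\<close> is a smoothed average of \<open>v\<close> near \<open>y\<close>.\<close>

definition square_bump :: "real \<Rightarrow> R2 \<Rightarrow> R2 \<Rightarrow> real" where
  "square_bump s y = tensor 1 2 (bump_on (y$1) s) (bump_on (y$2) s)"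

lemma square_bump_eq_tensor: "i \<noteq> j \<Longrightarrow> tensor i j (bump_on (y$i) s) (bump_on (y$j) s) = square_bump s y"
  using index_2_cases[of i j 1] index_2_cases[of i j 2] exhaust_2[of i]
  by (auto simp: square_bump_def tensor_swap)

lemma square_bump_average_eq_0:
  assumes adm: "cap_admissible F0 F1 \<Omega> v G" and s: "0 < s" and p: "cball p (2 * s) \<subseteq> F0"
  shows "integral \<Omega> (\<lambda>z. v z * square_bump s p z) = 0"
proof -
  obtain U where U: "F0 \<subseteq> U" "\<forall>z\<in>U \<inter> \<Omega>. v z = 0" using adm by (auto simp: cap_admissible_def)
  have "v z * square_bump s p z = 0" if "z \<in> \<Omega>" for z
  proof (cases "square_bump s p z = 0")
    case False
    then have "p$1 \<le> z$1 \<and> z$1 \<le> p$1 + s" "p$2 \<le> z$2 \<and> z$2 \<le> p$2 + s"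
      using bump_on_support[OF s] by (auto simp: square_bump_def tensor_def)
    then have "dist p z \<le> 2 * s" using dist_le_coordinate_sum[of 1 2 z p] by (simp add: dist_commute)
    then have "z \<in> U" using p U(1) by auto
    then show ?thesis using U(2) that by simp
  qed simp
  then show ?thesis by (simp add: integral_cong[of \<Omega> _ "\<lambda>z. 0"])
qed

text \<open>A hop from \<open>y\<close> to a nearby \<open>z\<close>: first slide the square in direction \<open>1\<close>,
  then in direction \<open>2\<close>.\<close>

definition hop_weight :: "real \<Rightarrow> R2 \<Rightarrow> R2 \<Rightarrow> R2 \<Rightarrow> real" where
  "hop_weight s y z x =
     tensor 1 2 (trapezoid (min (y$1) (z$1)) (max (y$1 + s) (z$1 + s)) s) (bump_on (y$2) s) x
   + tensor 2 1 (trapezoid (min (y$2) (z$2)) (max (y$2 + s) (z$2 + s)) s) (bump_on (z$1) s) x"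

lemma hop_boxes:
  fixes y z :: R2
  assumes s: "0 < s" and "cball y (6 * s) \<subseteq> \<Omega>" and "norm (z - y) \<le> s"
  shows "\<And>u. min (y$1) (z$1) - s \<le> u$1 \<Longrightarrow> u$1 \<le> max (y$1 + s) (z$1 + s) + s
           \<Longrightarrow> y$2 \<le> u$2 \<Longrightarrow> u$2 \<le> y$2 + s \<Longrightarrow> u \<in> \<Omega>"
    and "\<And>u. min (y$2) (z$2) - s \<le> u$2 \<Longrightarrow> u$2 \<le> max (y$2 + s) (z$2 + s) + s
           \<Longrightarrow> z$1 \<le> u$1 \<Longrightarrow> u$1 \<le> z$1 + s \<Longrightarrow> u \<in> \<Omega>"
proof -
  have z: "\<bar>z$k - y$k\<bar> \<le> s" for k using component_le_norm_cart[of "z - y" k] assms(3) by simp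
  have in_\<Omega>: "u \<in> \<Omega>" if "\<bar>u$1 - y$1\<bar> + \<bar>u$2 - y$2\<bar> \<le> 6 * s" for u
    using dist_le_coordinate_sum[of 1 2 u y] that assms(2) by (auto simp: dist_commute)
  show "u \<in> \<Omega>" if "min (y$1) (z$1) - s \<le> u$1" "u$1 \<le> max (y$1 + s) (z$1 + s) + s"
      "y$2 \<le> u$2" "u$2 \<le> y$2 + s" for u
    using that z[of 1] s by (intro in_\<Omega>) (auto simp: abs_le_iff min_def max_def split: if_splits)
  show "u \<in> \<Omega>" if "min (y$2) (z$2) - s \<le> u$2" "u$2 \<le> max (y$2 + s) (z$2 + s) + s"
      "z$1 \<le> u$1" "u$1 \<le> z$1 + s" for u
    using that z[of 1] z[of 2] s by (intro in_\<Omega>) (auto simp: abs_le_iff min_def max_def split: if_splits)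
qed

lemma weight_hop:
  assumes "0 < s" "cball y (6 * s) \<subseteq> \<Omega>" "norm (z - y) \<le> s"
  shows "weight \<Omega> (hop_weight s y z)"
  unfolding hop_weight_def[abs_def] using hop_boxes[OF assms] assms(1)
  by (intro weight_add weight_trapezoid_bump) auto

lemma hop_estimate:
  assumes adm: "cap_admissible F0 F1 \<Omega> v G"
    and s: "0 < s" and y: "cball y (6 * s) \<subseteq> \<Omega>" and z: "norm (z - y) \<le> s"
  shows "integral \<Omega> (\<lambda>x. v x * square_bump s y x)
       \<le> integral \<Omega> (\<lambda>x. v x * square_bump s z x) + integral \<Omega> (\<lambda>x. norm (G x) * hop_weight s y z x)"
proof -
  note boxes = hop_boxes[OF s y z]
  let ?h1 = "tensor 1 2 (trapezoid (min (y$1) (z$1)) (max (y$1 + s) (z$1 + s)) s) (bump_on (y$2) s)"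
  let ?h2 = "tensor 2 1 (trapezoid (min (y$2) (z$2)) (max (y$2 + s) (z$2 + s)) s) (bump_on (z$1) s)"
  have "\<bar>integral \<Omega> (\<lambda>x. v x * square_bump s y x)
      - integral \<Omega> (\<lambda>x. v x * tensor 1 2 (bump_on (z$1) s) (bump_on (y$2) s) x)\<bar>
      \<le> integral \<Omega> (\<lambda>x. norm (G x) * ?h1 x)"
    unfolding square_bump_def by (rule slide_estimate_trapezoid[OF adm _ s s s s boxes(1)]) auto
  moreover have "\<bar>integral \<Omega> (\<lambda>x. v x * tensor 2 1 (bump_on (y$2) s) (bump_on (z$1) s) x)
      - integral \<Omega> (\<lambda>x. v x * tensor 2 1 (bump_on (z$2) s) (bump_on (z$1) s) x)\<bar>
      \<le> integral \<Omega> (\<lambda>x. norm (G x) * ?h2 x)"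
    by (rule slide_estimate_trapezoid[OF adm _ s s s s boxes(2)]) auto
  then have "\<bar>integral \<Omega> (\<lambda>x. v x * tensor 1 2 (bump_on (z$1) s) (bump_on (y$2) s) x)
      - integral \<Omega> (\<lambda>x. v x * square_bump s z x)\<bar> \<le> integral \<Omega> (\<lambda>x. norm (G x) * ?h2 x)"
    by (simp only: tensor_swap[of 2 1] square_bump_def)
  moreover have "integral \<Omega> (\<lambda>x. norm (G x) * hop_weight s y z x)
      = integral \<Omega> (\<lambda>x. norm (G x) * ?h1 x) + integral \<Omega> (\<lambda>x. norm (G x) * ?h2 x)"
    using flux_add[OF adm, of ?h1 ?h2] weight_trapezoid_bump[OF _ s s boxes(1)]
      weight_trapezoid_bump[OF _ s s boxes(2)]
    by (simp add: hop_weight_def weight_def)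
  ultimately show ?thesis by linarith
qed

definition chain_weight :: "real \<Rightarrow> (nat \<Rightarrow> R2) \<Rightarrow> nat \<Rightarrow> R2 \<Rightarrow> real" where
  "chain_weight s y N x = (\<Sum>k<N. hop_weight s (y k) (y (Suc k)) x)"

definition fine_chain :: "R2 set \<Rightarrow> real \<Rightarrow> (nat \<Rightarrow> R2) \<Rightarrow> nat \<Rightarrow> bool" where
  "fine_chain \<Omega> s y N \<longleftrightarrow> (\<forall>k<N. cball (y k) (6 * s) \<subseteq> \<Omega> \<and> norm (y (Suc k) - y k) \<le> s)"

lemma weight_chain:
  "0 < s \<Longrightarrow> fine_chain \<Omega> s y N \<Longrightarrow> weight \<Omega> (chain_weight s y N)"
  unfolding chain_weight_def[abs_def] fine_chain_def by (intro weight_sum weight_hop) auto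

lemma chain_estimate:
  assumes adm: "cap_admissible F0 F1 \<Omega> v G" and s: "0 < s" and chain: "fine_chain \<Omega> s y N"
  shows "integral \<Omega> (\<lambda>x. v x * square_bump s (y 0) x)
       \<le> integral \<Omega> (\<lambda>x. v x * square_bump s (y N) x) + integral \<Omega> (\<lambda>x. norm (G x) * chain_weight s y N x)"
  using chain
proof (induction N)
  case (Suc N)
  then have chain_N: "fine_chain \<Omega> s y N" and last: "cball (y N) (6 * s) \<subseteq> \<Omega>" "norm (y (Suc N) - y N) \<le> s"
    by (auto simp: fine_chain_def)
  have "integral \<Omega> (\<lambda>x. norm (G x) * chain_weight s y (Suc N) x)
      = integral \<Omega> (\<lambda>x. norm (G x) * chain_weight s y N x)
        + integral \<Omega> (\<lambda>x. norm (G x) * hop_weight s (y N) (y (Suc N)) x)"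
    using flux_add[OF adm, of "chain_weight s y N" "hop_weight s (y N) (y (Suc N))"]
      weight_chain[OF s chain_N] weight_hop[OF s last]
    by (simp add: chain_weight_def weight_def)
  with Suc.IH[OF chain_N] hop_estimate[OF adm s last] show ?case by linarith
qed (simp add: chain_weight_def)

lemma fine_chain_along_path:
  assumes "open \<Omega>" "path \<pi>" "path_image \<pi> \<subseteq> \<Omega>" "0 < s0"
  obtains s y N where "0 < s" "s \<le> s0" "y 0 = pathstart \<pi>" "y N = pathfinish \<pi>" "fine_chain \<Omega> s y N"
proof -
  obtain \<delta> where \<delta>: "0 < \<delta>" "(\<Union>y\<in>path_image \<pi>. cball y \<delta>) \<subseteq> \<Omega>"
    using compact_subset_open_imp_cball_epsilon_subset[OF compact_path_image] assms by metis
  define s where "s = min s0 (\<delta> / 6)"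
  have s: "0 < s" "s \<le> s0" "6 * s \<le> \<delta>" using \<delta> assms(4) by (auto simp: s_def)
  obtain d where d: "0 < d" "\<forall>t\<in>{0..1}. \<forall>t'\<in>{0..1}. dist t' t < d \<longrightarrow> dist (\<pi> t') (\<pi> t) < s"
    using compact_uniformly_continuous[of "{0..1}" \<pi>] assms(2) s(1)
    unfolding path_def uniformly_continuous_on_def by (metis compact_Icc)
  obtain N where N: "inverse (real (Suc N)) < d" using reals_Archimedean[OF d(1)] by blast
  define y where "y k = \<pi> (real k / real (Suc N))" for k
  have "fine_chain \<Omega> s y (Suc N)"
    unfolding fine_chain_def
  proof (intro allI impI conjI)
    fix k assume k: "k < Suc N"
    have t: "real k / real (Suc N) \<in> {0..1}" "real (Suc k) / real (Suc N) \<in> {0..1}" using k by auto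
    then have "y k \<in> path_image \<pi>" by (simp add: y_def path_image_def)
    then show "cball (y k) (6 * s) \<subseteq> \<Omega>" using \<delta>(2) subset_cball[OF s(3)] by blast
    have "dist (real (Suc k) / real (Suc N)) (real k / real (Suc N)) < d"
      using N by (simp add: dist_real_def divide_simps)
    then show "norm (y (Suc k) - y k) \<le> s" using d(2) t by (force simp: y_def dist_norm)
  qed
  moreover have "y 0 = pathstart \<pi>" "y (Suc N) = pathfinish \<pi>" by (simp_all add: y_def pathstart_def pathfinish_def)
  ultimately show ?thesis using that s by blast
qed

subsection \<open>Averages near a crossing of the path\<close>

lemma has_integral_UNIV_supported_cbox:
  fixes f :: "R2 \<Rightarrow> real"
  assumes "continuous_on UNIV f" "\<And>x. f x \<noteq> 0 \<Longrightarrow> x \<in> cbox l u"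
  shows "(f has_integral integral (cbox l u) f) UNIV"
proof -
  have "(f has_integral integral (cbox l u) f) (cbox l u)"
    using integrable_continuous[OF continuous_on_subset[OF assms(1)]] by (simp add: integrable_integral)
  then show ?thesis by (rule has_integral_on_superset) (use assms(2) in auto)
qed

lemma tensor_bump_on_stretch:
  assumes "i \<noteq> j" "0 < e"
  shows "tensor i j (bump_on t e) \<psi> ((\<chi> k. (if k = i then e else 1) * x$k) + coords i t 0)
       = tensor i j (bump_on 0 1) \<psi> x / e"
  using assms by (simp add: tensor_def coords_def bump_on_rescale mult.commute)

lemma integral_tensor_bump_rescale:
  assumes ij: "i \<noteq> j" and e: "0 < e"
    and \<psi>: "continuous_on UNIV \<psi>" "\<And>t. \<psi> t \<noteq> 0 \<Longrightarrow> q \<le> t \<and> t \<le> q'"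
  shows "integral UNIV (tensor i j (bump_on t e) \<psi>) = integral UNIV (tensor i j (bump_on 0 1) \<psi>)"
proof -
  let ?f = "tensor i j (bump_on t e) \<psi>"
  let ?l = "coords i t q" and ?u = "coords i (t + e) q'"
  define I where "I = integral (cbox ?l ?u) ?f"
  have fc: "continuous_on UNIV ?f"
    by (rule continuous_on_tensor[OF real_smooth_continuous_on[OF real_smooth_bump_on] \<psi>(1)])
  have fs: "?f x \<noteq> 0 \<Longrightarrow> x \<in> cbox ?l ?u" for x
    by (rule tensor_support[OF ij bump_on_support[OF e] \<psi>(2)])
  have fU: "integral UNIV ?f = I"
    using has_integral_UNIV_supported_cbox[OF fc fs] by (simp add: I_def integral_unique)
  define c :: R2 where "c = coords i t 0"
  have shifted: "((\<lambda>x. ?f (x + c)) has_integral I) (cbox (?l - c) (?u - c))"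
    by (rule has_integral_shift_cbox)
      (use integrable_continuous[OF continuous_on_subset[OF fc]] in \<open>simp add: integrable_integral I_def\<close>)
  define m :: "2 \<Rightarrow> real" where "m k = (if k = i then e else 1)" for k
  have m0: "\<And>k. m k \<noteq> 0" using e by (simp add: m_def)
  have "prod m UNIV = e"
    using exhaust_2[of i] by (auto simp: UNIV_2 m_def)
  then have "((\<lambda>x. ?f ((\<chi> k. m k * x$k) + c)) has_integral I /\<^sub>R \<bar>e\<bar>)
      ((\<lambda>x. \<chi> k. x$k / m k) ` cbox (?l - c) (?u - c))"
    using has_integral_stretch_cart[where m=m, OF shifted m0] by simp
  moreover have "?f ((\<chi> k. m k * x$k) + c) = tensor i j (bump_on 0 1) \<psi> x / e" for x
    unfolding m_def c_def by (rule tensor_bump_on_stretch[OF ij e])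
  ultimately have "((\<lambda>x. tensor i j (bump_on 0 1) \<psi> x / e) has_integral I / e)
      ((\<lambda>x. \<chi> k. x$k / m k) ` cbox (?l - c) (?u - c))"
    using e by (simp add: divide_inverse_commute)
  from has_integral_mult_right[OF this, of e]
  have stretched: "(tensor i j (bump_on 0 1) \<psi> has_integral I) ((\<lambda>x. \<chi> k. x$k / m k) ` cbox (?l - c) (?u - c))"
    using e by simp
  have "(tensor i j (bump_on 0 1) \<psi> has_integral I) UNIV"
  proof (rule has_integral_on_superset[OF stretched])
    fix x assume nx: "x \<notin> (\<lambda>x. \<chi> k. x$k / m k) ` cbox (?l - c) (?u - c)"
    show "tensor i j (bump_on 0 1) \<psi> x = 0"
    proof (rule ccontr)
      assume "tensor i j (bump_on 0 1) \<psi> x \<noteq> 0"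
      with e have "?f ((\<chi> k. m k * x$k) + c) \<noteq> 0"
        unfolding m_def c_def tensor_bump_on_stretch[OF ij e] by simp
      then have "(\<chi> k. m k * x$k) + c \<in> cbox ?l ?u" by (rule fs)
      then have "(\<chi> k. m k * x$k) \<in> cbox (?l - c) (?u - c)"
        by (simp add: mem_box_cart) (metis add_le_cancel_right diff_add_cancel)
      moreover have "x = (\<lambda>x. \<chi> k. x$k / m k) (\<chi> k. m k * x$k)" using m0 by (simp add: vec_eq_iff)
      ultimately show False using nx by blast
    qed
  qed auto
  then show ?thesis using fU by (simp add: integral_unique)
qed

lemma integral_tensor_bumps_pos:
  assumes ij: "i \<noteq> j" and a: "0 < a"
  shows "0 < integral UNIV (tensor i j (bump_on 0 1) (bump_on \<alpha> a))"
proof -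
  let ?f = "tensor i j (bump_on 0 1) (bump_on \<alpha> a)"
  let ?l = "coords i 0 \<alpha>" and ?u = "coords i 1 (\<alpha> + a)"
  have fc: "continuous_on UNIV ?f"
    by (intro continuous_on_tensor real_smooth_continuous_on real_smooth_bump_on)
  have fn: "0 \<le> ?f x" for x using bump_on_nonneg[of 1] bump_on_nonneg[OF a] by (simp add: tensor_def)
  have int: "?f integrable_on cbox ?l ?u" by (rule integrable_continuous[OF continuous_on_subset[OF fc]]) auto
  have U: "integral UNIV ?f = integral (cbox ?l ?u) ?f"
    using has_integral_UNIV_supported_cbox[OF fc tensor_support[OF ij bump_on_support[of 1 0]
          bump_on_support[OF a]]]
    by (simp add: integral_unique)
  define x0 where "x0 = coords i (1/2) (\<alpha> + a/2)"
  have "x0 \<in> box ?l ?u"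
  proof -
    have "(\<forall>k. Q k) \<longleftrightarrow> Q i \<and> Q j" for Q using index_2_cases[OF ij] by metis
    then show ?thesis unfolding mem_box_cart using a ij by (simp add: x0_def coords_def)
  qed
  moreover have "0 < ?f x0" using a ij by (simp add: tensor_def x0_def coords_def bump_on_pos)
  ultimately have "integral (cbox ?l ?u) ?f \<noteq> 0"
    using has_integral_0_cbox_imp_0[of ?l ?u ?f x0] continuous_on_subset[OF fc] fn
      integrable_integral[OF int] box_subset_cbox by force
  moreover have "0 \<le> integral (cbox ?l ?u) ?f" by (rule integral_nonneg[OF int]) (simp add: fn)
  ultimately show ?thesis using U by simp
qed

lemma bump_fine_partition:
  assumes a: "0 < a" and w: "0 < w"
  shows "\<exists>\<psi> (K::nat) (e::nat \<Rightarrow> real). (\<forall>t. (\<Sum>k<K. \<psi> k t) = bump_on \<alpha> a t) \<and> (\<forall>k t. 0 \<le> \<psi> k t)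
    \<and> (\<forall>k. real_smooth (\<psi> k))
    \<and> (\<forall>k t. \<psi> k t \<noteq> 0 \<longrightarrow> \<alpha> \<le> t \<and> t \<le> \<alpha> + a \<and> e k \<le> t \<and> t \<le> e k + 2 * w)"
proof -
  define e where "e k = \<alpha> - w + real k * w" for k :: nat
  define K where "K = nat \<lceil>a / w\<rceil> + 1"
  have "a / w \<le> real (nat \<lceil>a / w\<rceil>)" by linarith
  then have "a \<le> real (nat \<lceil>a / w\<rceil>) * w" using w by (simp add: field_simps)
  then have eK: "\<alpha> + a \<le> e K" by (simp add: e_def K_def algebra_simps)
  have e_Suc: "e (Suc k) = e k + w" for k by (simp add: e_def algebra_simps)
  define \<psi> where "\<psi> k t = bump_on \<alpha> a t * (step_on (e k) w t - step_on (e (Suc k)) w t)" for k t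
  have "(\<Sum>k<K. \<psi> k t) = bump_on \<alpha> a t" for t
  proof (cases "bump_on \<alpha> a t = 0")
    case False
    then have "\<alpha> \<le> t" "t \<le> \<alpha> + a" using bump_on_support[OF a] by auto
    then have "step_on (e 0) w t = 1" "step_on (e K) w t = 0"
      using w eK by (auto intro!: step_on_eq_1 step_on_eq_0 simp: e_def)
    moreover have "(\<Sum>k<K. step_on (e k) w t - step_on (e (Suc k)) w t) = step_on (e 0) w t - step_on (e K) w t"
      by (rule sum_lessThan_telescope')
    ultimately show ?thesis by (simp add: \<psi>_def flip: sum_distrib_left)
  qed (simp add: \<psi>_def)
  moreover have "0 \<le> \<psi> k t" for k t
    unfolding \<psi>_def using bump_on_nonneg[OF a] step_on_antimono[OF w, of "e k" "e (Suc k)"] e_Suc w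
    by simp
  moreover have "real_smooth (\<psi> k)" for k
    unfolding \<psi>_def by (intro real_smooth_mult real_smooth_bump_on real_smooth_diff real_smooth_step_on)
  moreover have "\<alpha> \<le> t \<and> t \<le> \<alpha> + a \<and> e k \<le> t \<and> t \<le> e k + 2 * w" if "\<psi> k t \<noteq> 0" for k t
  proof -
    from that have "bump_on \<alpha> a t \<noteq> 0" "step_on (e k) w t - step_on (e (Suc k)) w t \<noteq> 0"
      by (auto simp: \<psi>_def)
    then show ?thesis
      using bump_on_support[OF a] step_on_diff_support[OF w w] e_Suc w by fastforce
  qed
  ultimately show ?thesis by blast
qed

lemma integral_tensor_sum:
  assumes "finite A" "\<And>k. k \<in> A \<Longrightarrow> (\<lambda>y. f y * tensor i j a (\<psi> k) y) integrable_on S"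
  shows "integral S (\<lambda>y. f y * tensor i j a (\<lambda>t. \<Sum>k\<in>A. \<psi> k t) y)
       = (\<Sum>k\<in>A. integral S (\<lambda>y. f y * tensor i j a (\<psi> k) y))"
proof -
  have "f y * tensor i j a (\<lambda>t. \<Sum>k\<in>A. \<psi> k t) y = (\<Sum>k\<in>A. f y * tensor i j a (\<psi> k) y)" for y
    by (simp add: tensor_def sum_distrib_left)
  then show ?thesis using integral_sum[OF assms] by simp
qed

text \<open>By rescaling, the left-hand side is the mass of the narrow bump at \<open>q\<close>, and \<open>v \<ge> 1\<close>
  on its support.\<close>

lemma narrow_bump_average_ge:
  fixes q :: R2
  assumes adm: "cap_admissible F0 F1 \<Omega> v G" and ij: "i \<noteq> j"
    and U: "\<And>y. y \<in> U \<Longrightarrow> y \<in> \<Omega> \<Longrightarrow> 1 \<le> v y" and q: "0 < \<epsilon>" "ball q \<epsilon> \<subseteq> U"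
    and \<psi>: "real_smooth \<psi>" "\<And>t. 0 \<le> \<psi> t"
      "\<And>t. \<psi> t \<noteq> 0 \<Longrightarrow> \<beta> \<le> t \<and> t \<le> \<beta>' \<and> \<bar>t - q$j\<bar> < \<epsilon> / 2"
    and box: "cbox (coords i (q$i - \<epsilon> / 4) \<beta>) (coords i (q$i) \<beta>') \<subseteq> \<Omega>"
  shows "integral UNIV (tensor i j (bump_on 0 1) \<psi>)
     \<le> integral \<Omega> (\<lambda>y. v y * tensor i j (bump_on (q$i - \<epsilon> / 4) (\<epsilon> / 4)) \<psi> y)"
proof -
  let ?n = "tensor i j (bump_on (q$i - \<epsilon> / 4) (\<epsilon> / 4)) \<psi>"
  have \<epsilon>4: "0 < \<epsilon> / 4" using q(1) by simp
  have n_support: "y \<in> ball q \<epsilon>" if "?n y \<noteq> 0" for y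
  proof -
    from that have "\<bar>y$i - q$i\<bar> \<le> \<epsilon> / 4" "\<bar>y$j - q$j\<bar> < \<epsilon> / 2"
      using bump_on_support[OF \<epsilon>4] \<psi>(3) by (fastforce simp: tensor_def)+
    then show "y \<in> ball q \<epsilon>"
      using dist_le_coordinate_sum[OF ij, of q y] q(1) by (simp add: abs_minus_commute)
  qed
  have n_Cc: "Cc \<Omega> ?n"
  proof (rule Cc_tensor[OF ij real_smooth_continuous_on[OF real_smooth_bump_on]
        real_smooth_continuous_on[OF \<psi>(1)] bump_on_support[OF \<epsilon>4]])
    show "\<psi> t \<noteq> 0 \<Longrightarrow> \<beta> \<le> t \<and> t \<le> \<beta>'" for t using \<psi>(3) by blast
    show "cbox (coords i (q$i - \<epsilon> / 4) \<beta>) (coords i (q$i - \<epsilon> / 4 + \<epsilon> / 4) \<beta>') \<subseteq> \<Omega>"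
      using box by simp
  qed
  have "integral UNIV (tensor i j (bump_on 0 1) \<psi>) = integral \<Omega> ?n"
    using integral_tensor_bump_rescale[OF ij \<epsilon>4 real_smooth_continuous_on[OF \<psi>(1)]]
      Cc_integrable_on(2)[OF n_Cc] \<psi>(3) by metis
  also have "\<dots> \<le> integral \<Omega> (\<lambda>y. v y * ?n y)"
  proof (rule integral_le[OF Cc_integrable_on(1)[OF n_Cc] admissible_times_Cc_integrable(1)[OF adm n_Cc]])
    fix y assume "y \<in> \<Omega>"
    have "0 \<le> ?n y" using bump_on_nonneg[OF \<epsilon>4] \<psi>(2) by (simp add: tensor_def)
    moreover have "?n y \<noteq> 0 \<Longrightarrow> 1 \<le> v y" using n_support q(2) U \<open>y \<in> \<Omega>\<close> by blast
    ultimately show "?n y \<le> v y * ?n y"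
      by (cases "?n y = 0") (simp_all add: mult_right_mono[of 1 "v y", simplified])
  qed
  finally show ?thesis .
qed

text \<open>One piece of the crossing estimate: the narrow bump is reached from the wide bump
  around \<open>x\<close> by a single slide.\<close>

lemma crossing_piece_estimate:
  fixes x q :: R2
  assumes adm: "cap_admissible F0 F1 \<Omega> v G" and ij: "i \<noteq> j" and a: "0 < a"
    and sq: "\<And>y. \<bar>y$i - x$i\<bar> \<le> 3 * a \<Longrightarrow> \<bar>y$j - x$j\<bar> \<le> 3 * a \<Longrightarrow> y \<in> \<Omega>"
    and U: "\<And>y. y \<in> U \<Longrightarrow> y \<in> \<Omega> \<Longrightarrow> 1 \<le> v y"
    and q: "\<bar>q$i - x$i\<bar> \<le> a" "0 < \<epsilon>" "\<epsilon> \<le> a" "ball q \<epsilon> \<subseteq> U"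
    and \<psi>: "real_smooth \<psi>" "\<And>t. 0 \<le> \<psi> t"
      "\<And>t. \<psi> t \<noteq> 0 \<Longrightarrow> \<bar>t - x$j\<bar> \<le> 3 * a \<and> \<bar>t - q$j\<bar> < \<epsilon> / 2"
  shows "integral UNIV (tensor i j (bump_on 0 1) \<psi>)
       - integral \<Omega> (\<lambda>y. norm (G y) * tensor i j (trapezoid (x$i - 2 * a) (x$i + 2 * a) a) \<psi> y)
     \<le> integral \<Omega> (\<lambda>y. v y * tensor i j (bump_on (x$i - a) (2 * a)) \<psi> y)"
proof -
  have \<epsilon>4: "0 < \<epsilon> / 4" using q(2) by simp
  have \<psi>_support: "\<And>t. \<psi> t \<noteq> 0 \<Longrightarrow> x$j - 3 * a \<le> t \<and> t \<le> x$j + 3 * a"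
    using \<psi>(3) by (fastforce simp: abs_le_iff)
  have box: "cbox (coords i (x$i - 3 * a) (x$j - 3 * a)) (coords i (x$i + 3 * a) (x$j + 3 * a)) \<subseteq> \<Omega>"
    using sq by (auto simp: mem_cbox_coords[OF ij] abs_le_iff)
  have "\<bar>integral \<Omega> (\<lambda>y. v y * tensor i j (bump_on (x$i - a) (2 * a)) \<psi> y)
      - integral \<Omega> (\<lambda>y. v y * tensor i j (bump_on (q$i - \<epsilon> / 4) (\<epsilon> / 4)) \<psi> y)\<bar>
      \<le> integral \<Omega> (\<lambda>y. norm (G y) * tensor i j (trapezoid (x$i - 2 * a) (x$i + 2 * a) a) \<psi> y)"
  proof (rule slide_estimate[OF adm ij _ \<epsilon>4 \<psi>(1,2) \<psi>_support _ trapezoid_nonneg _ _ box])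
    show "0 < 2 * a" "continuous_on UNIV (trapezoid (x$i - 2 * a) (x$i + 2 * a) a)"
      using a by (simp_all add: continuous_on_trapezoid)
    fix t
    show "trapezoid (x$i - 2 * a) (x$i + 2 * a) a t \<noteq> 0 \<Longrightarrow> x$i - 3 * a \<le> t \<and> t \<le> x$i + 3 * a"
      using trapezoid_support[OF a, of "x$i - 2 * a" "x$i + 2 * a" t] by simp
    assume "min (x$i - a) (q$i - \<epsilon> / 4) \<le> t" "t \<le> max (x$i - a + 2 * a) (q$i - \<epsilon> / 4 + \<epsilon> / 4)"
    then show "1 \<le> trapezoid (x$i - 2 * a) (x$i + 2 * a) a t"
      using q a trapezoid_eq_1[OF a] by (auto simp: abs_le_iff)
  qed
  moreover have "integral UNIV (tensor i j (bump_on 0 1) \<psi>)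
      \<le> integral \<Omega> (\<lambda>y. v y * tensor i j (bump_on (q$i - \<epsilon> / 4) (\<epsilon> / 4)) \<psi> y)"
    by (rule narrow_bump_average_ge[OF adm ij U q(2,4) \<psi>(1,2), of "x$j - 3 * a" "x$j + 3 * a"])
      (use \<psi>_support \<psi>(3) sq q a in \<open>auto simp: mem_cbox_coords[OF ij] abs_le_iff\<close>)
  ultimately show ?thesis by linarith
qed

text \<open>If the path crosses the strip \<open>\<alpha> \<le> y$j \<le> \<alpha> + a\<close> inside \<open>\<bar>y$i - x$i\<bar> \<le> a\<close>, a
  Lebesgue number of a cover of the crossing by balls inside \<open>U\<close> gives a scale \<open>\<delta>\<close> at
  which every short interval of the strip lies under one ball. Splitting \<open>bump_on \<alpha> a\<close>
  into pieces supported at that scale, each piece is handled by the piece estimate.\<close>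

lemma crossing_cover:
  fixes x :: R2
  assumes a: "0 < a" and U: "open U"
    and cross: "\<And>c. \<alpha> \<le> c \<Longrightarrow> c \<le> \<alpha> + a \<Longrightarrow> \<exists>q\<in>U. q$j = c \<and> \<bar>q$i - x$i\<bar> \<le> a"
  shows "\<exists>\<delta>>0. \<forall>e. \<exists>q \<epsilon>. \<bar>q$i - x$i\<bar> \<le> a \<and> 0 < \<epsilon> \<and> \<epsilon> \<le> a \<and> ball q \<epsilon> \<subseteq> U \<and>
           (\<forall>t. \<alpha> \<le> t \<and> t \<le> \<alpha> + a \<and> e \<le> t \<and> t \<le> e + \<delta> \<longrightarrow> \<bar>t - q$j\<bar> < \<epsilon> / 2)"
proof -
  define S where "S = {\<alpha>..\<alpha> + a}"
  have "\<forall>c\<in>S. \<exists>q\<epsilon>. fst q\<epsilon> $ j = c \<and> \<bar>fst q\<epsilon> $ i - x$i\<bar> \<le> a \<and> 0 < snd q\<epsilon> \<and> snd q\<epsilon> \<le> a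
      \<and> ball (fst q\<epsilon>) (snd q\<epsilon>) \<subseteq> U"
  proof
    fix c assume "c \<in> S"
    then obtain q where q: "q \<in> U" "q$j = c" "\<bar>q$i - x$i\<bar> \<le> a" using cross by (auto simp: S_def)
    obtain r where "0 < r" "ball q r \<subseteq> U" using U q(1) by (meson openE)
    with q a show "\<exists>q\<epsilon>. fst q\<epsilon> $ j = c \<and> \<bar>fst q\<epsilon> $ i - x$i\<bar> \<le> a \<and> 0 < snd q\<epsilon> \<and> snd q\<epsilon> \<le> a
        \<and> ball (fst q\<epsilon>) (snd q\<epsilon>) \<subseteq> U"
      by (intro exI[of _ "(q, min r a)"]) auto
  qed
  then obtain q\<epsilon> where q\<epsilon>: "\<And>c. c \<in> S \<Longrightarrow> fst (q\<epsilon> c) $ j = c \<and> \<bar>fst (q\<epsilon> c) $ i - x$i\<bar> \<le> a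
      \<and> 0 < snd (q\<epsilon> c) \<and> snd (q\<epsilon> c) \<le> a \<and> ball (fst (q\<epsilon> c)) (snd (q\<epsilon> c)) \<subseteq> U"
    by (metis bchoice)
  define \<epsilon> where "\<epsilon> c = snd (q\<epsilon> c)" for c
  have cover: "S \<subseteq> \<Union> ((\<lambda>c. ball c (\<epsilon> c / 2)) ` S)"
    using q\<epsilon> by (force simp: \<epsilon>_def)
  have "compact S" "(\<lambda>c. ball c (\<epsilon> c / 2)) ` S \<noteq> {}" using a by (auto simp: S_def)
  then obtain L where L: "0 < L"
    "\<And>T. T \<subseteq> S \<Longrightarrow> diameter T < L \<Longrightarrow> \<exists>B\<in>(\<lambda>c. ball c (\<epsilon> c / 2)) ` S. T \<subseteq> B"
    using Lebesgue_number_lemma[OF _ _ cover] by blast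
  have "\<exists>q \<epsilon>. \<bar>q$i - x$i\<bar> \<le> a \<and> 0 < \<epsilon> \<and> \<epsilon> \<le> a \<and> ball q \<epsilon> \<subseteq> U \<and>
      (\<forall>t. \<alpha> \<le> t \<and> t \<le> \<alpha> + a \<and> e \<le> t \<and> t \<le> e + L / 2 \<longrightarrow> \<bar>t - q$j\<bar> < \<epsilon> / 2)" for e
  proof -
    have "diameter {t\<in>S. e \<le> t \<and> t \<le> e + L / 2} \<le> L / 2"
      by (rule diameter_le) (use L(1) in \<open>auto simp: dist_real_def abs_if\<close>)
    then obtain c where c: "c \<in> S" "{t\<in>S. e \<le> t \<and> t \<le> e + L / 2} \<subseteq> ball c (\<epsilon> c / 2)"
      using L(1) L(2)[of "{t\<in>S. e \<le> t \<and> t \<le> e + L / 2}"] by auto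
    show ?thesis
    proof (intro exI conjI allI impI)
      fix t assume "\<alpha> \<le> t \<and> t \<le> \<alpha> + a \<and> e \<le> t \<and> t \<le> e + L / 2"
      with c(2) have "dist c t < \<epsilon> c / 2" by (auto simp: S_def subset_iff)
      then show "\<bar>t - fst (q\<epsilon> c) $ j\<bar> < \<epsilon> c / 2"
        using q\<epsilon>[OF c(1)] by (simp add: dist_real_def abs_minus_commute)
    qed (use q\<epsilon>[OF c(1)] in \<open>auto simp: \<epsilon>_def\<close>)
  qed
  then show ?thesis using L(1) by (intro exI[of _ "L / 2"]) auto
qed

lemma crossing_partition:
  fixes x :: R2
  assumes a: "0 < a" and U: "open U"
    and cross: "\<And>c. \<alpha> \<le> c \<Longrightarrow> c \<le> \<alpha> + a \<Longrightarrow> \<exists>q\<in>U. q$j = c \<and> \<bar>q$i - x$i\<bar> \<le> a"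
  shows "\<exists>\<psi> (K::nat) q \<epsilon>. (\<forall>t. (\<Sum>k<K. \<psi> k t) = bump_on \<alpha> a t) \<and> (\<forall>k t. 0 \<le> \<psi> k t)
    \<and> (\<forall>k. real_smooth (\<psi> k))
    \<and> (\<forall>k. \<bar>q k $ i - x$i\<bar> \<le> a \<and> 0 < \<epsilon> k \<and> \<epsilon> k \<le> a \<and> ball (q k) (\<epsilon> k) \<subseteq> U)
    \<and> (\<forall>k t. \<psi> k t \<noteq> 0 \<longrightarrow> \<alpha> \<le> t \<and> t \<le> \<alpha> + a \<and> \<bar>t - q k $ j\<bar> < \<epsilon> k / 2)"
proof -
  obtain \<delta> where \<delta>: "0 < \<delta>" and near: "\<forall>e. \<exists>q \<epsilon>. \<bar>q$i - x$i\<bar> \<le> a \<and> 0 < \<epsilon> \<and> \<epsilon> \<le> a \<and>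
      ball q \<epsilon> \<subseteq> U \<and> (\<forall>t. \<alpha> \<le> t \<and> t \<le> \<alpha> + a \<and> e \<le> t \<and> t \<le> e + \<delta> \<longrightarrow> \<bar>t - q$j\<bar> < \<epsilon> / 2)"
    using crossing_cover[OF a U cross] by blast
  obtain q \<epsilon> where q\<epsilon>: "\<And>e. \<bar>q e $ i - x$i\<bar> \<le> a \<and> 0 < \<epsilon> e \<and> \<epsilon> e \<le> a \<and> ball (q e) (\<epsilon> e) \<subseteq> U \<and>
      (\<forall>t. \<alpha> \<le> t \<and> t \<le> \<alpha> + a \<and> e \<le> t \<and> t \<le> e + \<delta> \<longrightarrow> \<bar>t - q e $ j\<bar> < \<epsilon> e / 2)"
    using near by metis
  have "0 < \<delta> / 2" using \<delta> by simp
  then obtain \<psi> and K :: nat and e where "\<forall>t. (\<Sum>k<K. \<psi> k t) = bump_on \<alpha> a t" "\<forall>k t. 0 \<le> \<psi> k t"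
    "\<forall>k. real_smooth (\<psi> k)"
    and support: "\<forall>k t. \<psi> k t \<noteq> 0 \<longrightarrow> \<alpha> \<le> t \<and> t \<le> \<alpha> + a \<and> e k \<le> t \<and> t \<le> e k + 2 * (\<delta> / 2)"
    using bump_fine_partition[OF a, of "\<delta> / 2" \<alpha>] by blast
  moreover have "\<forall>k t. \<psi> k t \<noteq> 0 \<longrightarrow> \<alpha> \<le> t \<and> t \<le> \<alpha> + a \<and> \<bar>t - q (e k) $ j\<bar> < \<epsilon> (e k) / 2"
    using support q\<epsilon> by simp
  ultimately show ?thesis using q\<epsilon> by (intro exI[of _ \<psi>] exI[of _ K] exI[of _ "q \<circ> e"] exI[of _ "\<epsilon> \<circ> e"]) auto
qed

lemma crossing_estimate:
  fixes x :: R2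
  assumes adm: "cap_admissible F0 F1 \<Omega> v G" and ij: "i \<noteq> j" and a: "0 < a"
    and sq: "\<And>y. \<bar>y$i - x$i\<bar> \<le> 3 * a \<Longrightarrow> \<bar>y$j - x$j\<bar> \<le> 3 * a \<Longrightarrow> y \<in> \<Omega>"
    and \<alpha>: "x$j - a \<le> \<alpha>" "\<alpha> \<le> x$j"
    and U: "open U" "\<And>y. y \<in> U \<Longrightarrow> y \<in> \<Omega> \<Longrightarrow> 1 \<le> v y"
    and cross: "\<And>c. \<alpha> \<le> c \<Longrightarrow> c \<le> \<alpha> + a \<Longrightarrow> \<exists>q\<in>U. q$j = c \<and> \<bar>q$i - x$i\<bar> \<le> a"
  shows "integral UNIV (tensor i j (bump_on 0 1) (bump_on \<alpha> a))
       - integral \<Omega> (\<lambda>y. norm (G y) * tensor i j (trapezoid (x$i - 2 * a) (x$i + 2 * a) a) (bump_on \<alpha> a) y)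
     \<le> integral \<Omega> (\<lambda>y. v y * tensor i j (bump_on (x$i - a) (2 * a)) (bump_on \<alpha> a) y)"
proof -
  obtain \<psi> and K :: nat and q \<epsilon> where \<psi>_sum: "\<forall>t. (\<Sum>k<K. \<psi> k t) = bump_on \<alpha> a t"
    and \<psi>: "\<And>k t. 0 \<le> \<psi> k t" "\<And>k. real_smooth (\<psi> k)"
    and q\<epsilon>: "\<And>k. \<bar>q k $ i - x$i\<bar> \<le> a \<and> 0 < \<epsilon> k \<and> \<epsilon> k \<le> a \<and> ball (q k) (\<epsilon> k) \<subseteq> U"
    and support: "\<And>k t. \<psi> k t \<noteq> 0 \<Longrightarrow> \<alpha> \<le> t \<and> t \<le> \<alpha> + a \<and> \<bar>t - q k $ j\<bar> < \<epsilon> k / 2"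
    using crossing_partition[OF a U(1) cross] by blast
  have \<psi>_range: "\<And>k t. \<psi> k t \<noteq> 0 \<Longrightarrow> \<alpha> \<le> t \<and> t \<le> \<alpha> + a" using support by blast
  let ?trap = "trapezoid (x$i - 2 * a) (x$i + 2 * a) a"
  have piece: "integral UNIV (tensor i j (bump_on 0 1) (\<psi> k))
       - integral \<Omega> (\<lambda>y. norm (G y) * tensor i j ?trap (\<psi> k) y)
     \<le> integral \<Omega> (\<lambda>y. v y * tensor i j (bump_on (x$i - a) (2 * a)) (\<psi> k) y)" for k
  proof (rule crossing_piece_estimate[OF adm ij a sq U(2) _ _ _ _ \<psi>(2,1), where q = "q k" and \<epsilon> = "\<epsilon> k"])
    fix t assume "\<psi> k t \<noteq> 0"
    with support[of k t] \<alpha> show "\<bar>t - x$j\<bar> \<le> 3 * a \<and> \<bar>t - q k $ j\<bar> < \<epsilon> k / 2"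
      using a by (simp add: abs_le_iff)
  qed (use q\<epsilon>[of k] in auto)
  have \<psi>_Cc: "Cc \<Omega> (tensor i j f (\<psi> k))"
    if "continuous_on UNIV f" "\<And>t. f t \<noteq> 0 \<Longrightarrow> x$i - 3 * a \<le> t \<and> t \<le> x$i + 3 * a" for f k
    by (rule Cc_tensor[OF ij that(1) real_smooth_continuous_on[OF \<psi>(2)] that(2) \<psi>_range])
      (use sq \<alpha> a in \<open>auto simp: mem_cbox_coords[OF ij] abs_le_iff\<close>)
  have bump_fun: "bump_on \<alpha> a = (\<lambda>t. \<Sum>k<K. \<psi> k t)" using \<psi>_sum by simp
  have "integral UNIV (tensor i j (bump_on 0 1) (bump_on \<alpha> a))
      = (\<Sum>k<K. integral UNIV (tensor i j (bump_on 0 1) (\<psi> k)))"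
  proof -
    have "Cc UNIV (tensor i j (bump_on 0 1) (\<psi> k))" for k
      by (rule Cc_tensor[OF ij real_smooth_continuous_on[OF real_smooth_bump_on]
            real_smooth_continuous_on[OF \<psi>(2)] bump_on_support \<psi>_range]) auto
    then show ?thesis
      using integral_tensor_sum[of "{..<K}" "\<lambda>_. 1" i j "bump_on 0 1" \<psi> UNIV] Cc_integrable_on(1)
      by (simp add: bump_fun)
  qed
  moreover have "integral \<Omega> (\<lambda>y. norm (G y) * tensor i j ?trap (bump_on \<alpha> a) y)
      = (\<Sum>k<K. integral \<Omega> (\<lambda>y. norm (G y) * tensor i j ?trap (\<psi> k) y))"
    unfolding bump_fun
    by (intro integral_tensor_sum admissible_times_Cc_integrable(3)[OF adm] \<psi>_Cc continuous_on_trapezoid)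
      (use a trapezoid_support[OF a] in fastforce)+
  moreover have "integral \<Omega> (\<lambda>y. v y * tensor i j (bump_on (x$i - a) (2 * a)) (bump_on \<alpha> a) y)
      = (\<Sum>k<K. integral \<Omega> (\<lambda>y. v y * tensor i j (bump_on (x$i - a) (2 * a)) (\<psi> k) y))"
    unfolding bump_fun
    by (intro integral_tensor_sum admissible_times_Cc_integrable(1)[OF adm] \<psi>_Cc
        real_smooth_continuous_on[OF real_smooth_bump_on])
      (use a bump_on_support[of "2 * a" "x$i - a"] in fastforce)+
  ultimately show ?thesis using sum_mono[of "{..<K}", OF piece] by (simp add: sum_subtractf)
qed

text \<open>From the wide bump at the crossing back to the small square at \<open>x\<close>: two more slides.\<close>

definition link_weight :: "R2 \<Rightarrow> 2 \<Rightarrow> 2 \<Rightarrow> real \<Rightarrow> real \<Rightarrow> real \<Rightarrow> R2 \<Rightarrow> real" where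
  "link_weight x i j a s \<alpha> y =
     tensor j i (trapezoid (min \<alpha> (x$j)) (max (\<alpha> + a) (x$j + s)) a) (bump_on (x$i - a) (2 * a)) y
   + tensor i j (trapezoid (min (x$i - a) (x$i)) (max (x$i - a + 2 * a) (x$i + s)) a) (bump_on (x$j) s) y"

lemma link_boxes:
  fixes x :: R2
  assumes a: "0 < a" and s: "0 < s" "s \<le> a"
    and sq: "\<And>y. \<bar>y$i - x$i\<bar> \<le> 3 * a \<Longrightarrow> \<bar>y$j - x$j\<bar> \<le> 3 * a \<Longrightarrow> y \<in> \<Omega>"
    and \<alpha>: "x$j - a \<le> \<alpha>" "\<alpha> \<le> x$j"
  shows "\<And>y. min \<alpha> (x$j) - a \<le> y$j \<Longrightarrow> y$j \<le> max (\<alpha> + a) (x$j + s) + a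
           \<Longrightarrow> x$i - a \<le> y$i \<Longrightarrow> y$i \<le> x$i - a + 2 * a \<Longrightarrow> y \<in> \<Omega>"
    and "\<And>y. min (x$i - a) (x$i) - a \<le> y$i \<Longrightarrow> y$i \<le> max (x$i - a + 2 * a) (x$i + s) + a
           \<Longrightarrow> x$j \<le> y$j \<Longrightarrow> y$j \<le> x$j + s \<Longrightarrow> y \<in> \<Omega>"
  using \<alpha> s a by (auto intro!: sq simp: abs_le_iff min_def max_def split: if_splits)

lemma weight_link:
  fixes x :: R2
  assumes "i \<noteq> j" "0 < a" "0 < s" "s \<le> a"
    and "\<And>y. \<bar>y$i - x$i\<bar> \<le> 3 * a \<Longrightarrow> \<bar>y$j - x$j\<bar> \<le> 3 * a \<Longrightarrow> y \<in> \<Omega>"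
    and "x$j - a \<le> \<alpha>" "\<alpha> \<le> x$j"
  shows "weight \<Omega> (link_weight x i j a s \<alpha>)"
  unfolding link_weight_def[abs_def] using link_boxes[OF assms(2-7)] assms(1-3)
  by (intro weight_add weight_trapezoid_bump) auto

lemma link_estimate:
  fixes x :: R2
  assumes adm: "cap_admissible F0 F1 \<Omega> v G" and ij: "i \<noteq> j" and a: "0 < a" and s: "0 < s" "s \<le> a"
    and sq: "\<And>y. \<bar>y$i - x$i\<bar> \<le> 3 * a \<Longrightarrow> \<bar>y$j - x$j\<bar> \<le> 3 * a \<Longrightarrow> y \<in> \<Omega>"
    and \<alpha>: "x$j - a \<le> \<alpha>" "\<alpha> \<le> x$j"
  shows "integral \<Omega> (\<lambda>y. v y * tensor i j (bump_on (x$i - a) (2 * a)) (bump_on \<alpha> a) y)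
     \<le> integral \<Omega> (\<lambda>y. v y * square_bump s x y) + integral \<Omega> (\<lambda>y. norm (G y) * link_weight x i j a s \<alpha> y)"
proof -
  note boxes = link_boxes[OF a s sq \<alpha>]
  have a2: "0 < 2 * a" using a by simp
  let ?h1 = "tensor j i (trapezoid (min \<alpha> (x$j)) (max (\<alpha> + a) (x$j + s)) a) (bump_on (x$i - a) (2 * a))"
  let ?h2 = "tensor i j (trapezoid (min (x$i - a) (x$i)) (max (x$i - a + 2 * a) (x$i + s)) a) (bump_on (x$j) s)"
  have "\<bar>integral \<Omega> (\<lambda>y. v y * tensor j i (bump_on \<alpha> a) (bump_on (x$i - a) (2 * a)) y)
      - integral \<Omega> (\<lambda>y. v y * tensor j i (bump_on (x$j) s) (bump_on (x$i - a) (2 * a)) y)\<bar>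
      \<le> integral \<Omega> (\<lambda>y. norm (G y) * ?h1 y)"
    by (rule slide_estimate_trapezoid[OF adm ij[symmetric] a s(1) a2 a boxes(1)])
  then have "\<bar>integral \<Omega> (\<lambda>y. v y * tensor i j (bump_on (x$i - a) (2 * a)) (bump_on \<alpha> a) y)
      - integral \<Omega> (\<lambda>y. v y * tensor i j (bump_on (x$i - a) (2 * a)) (bump_on (x$j) s) y)\<bar>
      \<le> integral \<Omega> (\<lambda>y. norm (G y) * ?h1 y)"
    by (simp only: tensor_swap[of j i])
  moreover have "\<bar>integral \<Omega> (\<lambda>y. v y * tensor i j (bump_on (x$i - a) (2 * a)) (bump_on (x$j) s) y)
      - integral \<Omega> (\<lambda>y. v y * tensor i j (bump_on (x$i) s) (bump_on (x$j) s) y)\<bar>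
      \<le> integral \<Omega> (\<lambda>y. norm (G y) * ?h2 y)"
    by (rule slide_estimate_trapezoid[OF adm ij a2 s(1) s(1) a boxes(2)])
  moreover have "integral \<Omega> (\<lambda>y. norm (G y) * link_weight x i j a s \<alpha> y)
      = integral \<Omega> (\<lambda>y. norm (G y) * ?h1 y) + integral \<Omega> (\<lambda>y. norm (G y) * ?h2 y)"
    using flux_add[OF adm, of ?h1 ?h2] weight_trapezoid_bump[OF ij[symmetric] a2 a boxes(1)]
      weight_trapezoid_bump[OF ij s(1) a boxes(2)]
    by (simp add: link_weight_def weight_def)
  ultimately show ?thesis unfolding square_bump_eq_tensor[OF ij] by linarith
qed

subsection \<open>A path leaving a disc crosses one of four strips\<close>

lemma first_hitting_time:
  fixes f :: "real \<Rightarrow> real"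
  assumes f: "continuous_on {0..1} f" "f 0 \<le> a" "a \<le> f 1"
  obtains t0 where "0 \<le> t0" "t0 \<le> 1" "f t0 = a" "\<And>t. 0 \<le> t \<Longrightarrow> t \<le> t0 \<Longrightarrow> f t \<le> a"
proof -
  define T where "T = {t\<in>{0..1}. f t = a}"
  have ne: "T \<noteq> {}" using IVT'[of f 0 a 1] f by (auto simp: T_def)
  have "compact T"
  proof -
    have "closed T" unfolding T_def using continuous_closed_preimage_constant[OF f(1)] by simp
    moreover have "bounded T" by (rule bounded_subset[OF bounded_closed_interval]) (auto simp: T_def)
    ultimately show ?thesis by (simp add: compact_eq_bounded_closed)
  qed
  then have bdd: "bdd_below T" by (simp add: bounded_imp_bdd_below compact_imp_bounded)
  have T: "Inf T \<in> T" "\<And>t. t \<in> T \<Longrightarrow> Inf T \<le> t"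
    using closed_contains_Inf[OF ne bdd compact_imp_closed[OF \<open>compact T\<close>]] cInf_lower[OF _ bdd] by auto
  show ?thesis
  proof (rule that[of "Inf T"])
    show "0 \<le> Inf T" "Inf T \<le> 1" "f (Inf T) = a" using T(1) by (auto simp: T_def)
    fix t assume t: "0 \<le> t" "t \<le> Inf T"
    show "f t \<le> a"
    proof (rule ccontr)
      assume "\<not> f t \<le> a"
      then obtain u where "0 \<le> u" "u \<le> t" "f u = a"
        using IVT'[of f 0 a t] f t continuous_on_subset[OF f(1), of "{0..t}"] \<open>Inf T \<le> 1\<close> by auto
      moreover from this t \<open>Inf T \<le> 1\<close> have "u \<in> T" by (auto simp: T_def)
      ultimately have "u = t" using T(2)[of u] t by linarith
      with \<open>f u = a\<close> \<open>\<not> f t \<le> a\<close> show False by simp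
    qed
  qed
qed

definition other :: "2 \<Rightarrow> 2" where
  "other i = (if i = 1 then 2 else 1)"

lemma other_neq: "i \<noteq> other i"
  by (simp add: other_def)

lemma other_other: "other (other i) = i"
  using exhaust_2[of i] by (auto simp: other_def)

text \<open>A pair \<open>(i, \<alpha>)\<close> stands for the rectangle \<open>\<bar>y$i - x$i\<bar> \<le> a\<close>, \<open>\<alpha> \<le> y$(other i) \<le> \<alpha> + a\<close>.
  The four of them are the halves of the square \<open>\<bar>y - x\<bar>\<^sub>\<infinity> \<le> a\<close>, and a path from \<open>x\<close> that
  leaves this square crosses one of them from side to side.\<close>

definition strips :: "R2 \<Rightarrow> real \<Rightarrow> (2 \<times> real) set" where
  "strips x a = {(i, \<alpha>). \<alpha> = x$(other i) \<or> \<alpha> = x$(other i) - a}"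

lemma finite_strips: "finite (strips x a)"
proof -
  have "strips x a = (\<lambda>(i, b). (i, if b then x$(other i) else x$(other i) - a)) ` UNIV"
    by (auto simp: strips_def image_iff split: if_splits)
  then show ?thesis by simp
qed

lemma path_crosses_strip:
  fixes g :: "real \<Rightarrow> R2"
  assumes g: "path g" "pathstart g = x" "pathfinish g \<in> sphere x (2 * r)" and a: "0 < a" "a < r"
  obtains i \<alpha> where "(i, \<alpha>) \<in> strips x a"
    "\<And>c. \<alpha> \<le> c \<Longrightarrow> c \<le> \<alpha> + a \<Longrightarrow> \<exists>q\<in>path_image g. q$(other i) = c \<and> \<bar>q$i - x$i\<bar> \<le> a"
proof -
  define f where "f t = max \<bar>g t $ 1 - x$1\<bar> \<bar>g t $ 2 - x$2\<bar>" for t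
  have gk: "continuous_on {0..1} (\<lambda>t. g t $ k)" for k
    using g(1) by (intro continuous_on_component) (simp add: path_def)
  have "a \<le> f 1"
    using g(3) a dist_le_coordinate_sum[of 1 2 "g 1" x]
    by (auto simp: f_def pathfinish_def dist_commute)
  moreover have "f 0 = 0" using g(2) by (simp add: f_def pathstart_def)
  moreover have "continuous_on {0..1} f" unfolding f_def
    by (intro continuous_on_max continuous_on_rabs continuous_on_diff gk continuous_on_const)
  ultimately obtain t0 where t0: "0 \<le> t0" "t0 \<le> 1" "f t0 = a" "\<And>t. 0 \<le> t \<Longrightarrow> t \<le> t0 \<Longrightarrow> f t \<le> a"
    using first_hitting_time[of f a] a by auto
  have inside: "\<bar>g t $ k - x$k\<bar> \<le> a" if "0 \<le> t" "t \<le> t0" for t k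
    using t0(4)[OF that] exhaust_2[of k] by (auto simp: f_def)
  have in_image: "g t \<in> path_image g" if "0 \<le> t" "t \<le> t0" for t
    using that t0 by (auto simp: path_image_def)
  have g0: "g 0 $ k = x$k" for k using g(2) by (simp add: pathstart_def)
  obtain k where k: "\<bar>g t0 $ k - x$k\<bar> = a" using t0(3) by (auto simp: f_def max_def split: if_splits)
  have gk0: "continuous_on {0..t0} (\<lambda>t. g t $ k)" by (rule continuous_on_subset[OF gk]) (use t0(2) in auto)
  define \<alpha> where "\<alpha> = (if g t0 $ k - x$k = a then x$k else x$k - a)"
  show ?thesis
  proof (rule that[of "other k" \<alpha>])
    show "(other k, \<alpha>) \<in> strips x a" by (simp add: strips_def other_other \<alpha>_def)
    fix c assume c: "\<alpha> \<le> c" "c \<le> \<alpha> + a"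
    have "\<exists>t. 0 \<le> t \<and> t \<le> t0 \<and> g t $ k = c"
    proof (cases "g t0 $ k - x$k = a")
      case True
      then show ?thesis using IVT'[of "\<lambda>t. g t $ k" 0 c t0] g0 c t0(1) gk0 by (auto simp: \<alpha>_def)
    next
      case False
      then have "g t0 $ k - x$k = - a" using k by (auto simp: abs_if split: if_splits)
      then show ?thesis using IVT2'[of "\<lambda>t. g t $ k" t0 c 0] g0 c t0(1) gk0 False by (auto simp: \<alpha>_def)
    qed
    then show "\<exists>q\<in>path_image g. q$(other (other k)) = c \<and> \<bar>q$(other k) - x$(other k)\<bar> \<le> a"
      using in_image inside by (auto simp: other_other)
  qed
qed

subsection \<open>A flux bound independent of the path\<close>

fun crossing_mass :: "real \<Rightarrow> 2 \<times> real \<Rightarrow> real" where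
  "crossing_mass a (i, \<alpha>) = integral UNIV (tensor i (other i) (bump_on 0 1) (bump_on \<alpha> a))"

fun crossing_weight :: "R2 \<Rightarrow> real \<Rightarrow> real \<Rightarrow> 2 \<times> real \<Rightarrow> R2 \<Rightarrow> real" where
  "crossing_weight x a s (i, \<alpha>) y =
     tensor i (other i) (trapezoid (x$i - 2 * a) (x$i + 2 * a) a) (bump_on \<alpha> a) y
   + link_weight x i (other i) a s \<alpha> y"

lemma square_subset_ball:
  fixes x :: R2
  assumes "i \<noteq> j" "0 < a" "ball x (8 * a) \<subseteq> \<Omega>" "\<bar>y$i - x$i\<bar> \<le> 3 * a" "\<bar>y$j - x$j\<bar> \<le> 3 * a"
  shows "y \<in> \<Omega>"
  using dist_le_coordinate_sum[OF assms(1), of x y] assms(2-5) by (auto simp: abs_minus_commute)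

lemma weight_crossing:
  assumes "c \<in> strips x a" "0 < a" "0 < s" "s \<le> a" "ball x (8 * a) \<subseteq> \<Omega>"
  shows "weight \<Omega> (crossing_weight x a s c)"
proof -
  obtain i \<alpha> where c: "c = (i, \<alpha>)" "x$(other i) - a \<le> \<alpha>" "\<alpha> \<le> x$(other i)"
    using assms(1,2) by (auto simp: strips_def)
  note sq = square_subset_ball[OF other_neq[of i] assms(2,5)]
  have "weight \<Omega> (tensor i (other i) (trapezoid (x$i - 2 * a) (x$i + 2 * a) a) (bump_on \<alpha> a))"
    by (rule weight_trapezoid_bump[OF other_neq assms(2,2)]) (use c assms(2) in \<open>auto intro!: sq\<close>)
  with weight_link[OF other_neq assms(2-4) sq c(2,3)] show ?thesis
    unfolding c(1) crossing_weight.simps[abs_def] using assms(2) by (intro weight_add) auto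
qed

lemma crossing_mass_pos: "c \<in> strips x a \<Longrightarrow> 0 < a \<Longrightarrow> 0 < crossing_mass a c"
  using integral_tensor_bumps_pos[OF other_neq] by (auto simp: strips_def)

lemma path_crossing_estimate:
  fixes g :: "real \<Rightarrow> R2"
  assumes adm: "cap_admissible F0 (path_image g) \<Omega> v G"
    and g: "path g" "pathstart g = x" "pathfinish g \<in> sphere x (8 * a)"
    and a: "0 < a" and s: "0 < s" "s \<le> a" and ball: "ball x (8 * a) \<subseteq> \<Omega>"
  obtains c where "c \<in> strips x a"
    "crossing_mass a c \<le> integral \<Omega> (\<lambda>y. v y * square_bump s x y)
       + integral \<Omega> (\<lambda>y. norm (G y) * crossing_weight x a s c y)"
proof -
  obtain U where U: "open U" "path_image g \<subseteq> U" "\<forall>y\<in>U \<inter> \<Omega>. 1 \<le> v y"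
    using adm by (auto simp: cap_admissible_def)
  obtain i \<alpha> where c: "(i, \<alpha>) \<in> strips x a"
    and cross: "\<And>c. \<alpha> \<le> c \<Longrightarrow> c \<le> \<alpha> + a \<Longrightarrow> \<exists>q\<in>path_image g. q$(other i) = c \<and> \<bar>q$i - x$i\<bar> \<le> a"
    using path_crosses_strip[OF g(1,2), of "4 * a" a] g(3) a by auto
  have \<alpha>: "x$(other i) - a \<le> \<alpha>" "\<alpha> \<le> x$(other i)" using c a by (auto simp: strips_def)
  note sq = square_subset_ball[OF other_neq[of i] a ball]
  have "crossing_mass a (i, \<alpha>)
      - integral \<Omega> (\<lambda>y. norm (G y) * tensor i (other i) (trapezoid (x$i - 2 * a) (x$i + 2 * a) a) (bump_on \<alpha> a) y)
    \<le> integral \<Omega> (\<lambda>y. v y * tensor i (other i) (bump_on (x$i - a) (2 * a)) (bump_on \<alpha> a) y)"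
    unfolding crossing_mass.simps
  proof (rule crossing_estimate[OF adm other_neq a sq \<alpha> U(1)])
    show "\<exists>q\<in>U. q$(other i) = c \<and> \<bar>q$i - x$i\<bar> \<le> a" if "\<alpha> \<le> c" "c \<le> \<alpha> + a" for c
      using cross[OF that] U(2) by blast
  qed (use U(3) in auto)
  moreover have "weight \<Omega> (tensor i (other i) (trapezoid (x$i - 2 * a) (x$i + 2 * a) a) (bump_on \<alpha> a))"
    "weight \<Omega> (link_weight x i (other i) a s \<alpha>)"
    using weight_crossing[OF c a s ball] weight_link[OF other_neq a s sq \<alpha>]
    by (auto intro!: weight_trapezoid_bump[OF other_neq a a] sq simp: abs_le_iff) (use \<alpha> in linarith)+
  then have "integral \<Omega> (\<lambda>y. norm (G y) * crossing_weight x a s (i, \<alpha>) y)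
      = integral \<Omega> (\<lambda>y. norm (G y) * tensor i (other i) (trapezoid (x$i - 2 * a) (x$i + 2 * a) a) (bump_on \<alpha> a) y)
        + integral \<Omega> (\<lambda>y. norm (G y) * link_weight x i (other i) a s \<alpha> y)"
    using flux_add[OF adm] by (simp add: weight_def)
  ultimately show ?thesis
    using that[OF c] link_estimate[OF adm other_neq a s sq \<alpha>] by linarith
qed

lemma path_flux_estimate:
  fixes g :: "real \<Rightarrow> R2"
  assumes adm: "cap_admissible F0 (path_image g) \<Omega> v G"
    and g: "path g" "pathstart g = x" "pathfinish g \<in> sphere x (8 * a)"
    and a: "0 < a" and x: "ball x (8 * a) \<subseteq> \<Omega>" and s: "0 < s" "s \<le> a"
    and q: "fine_chain \<Omega> s q N" "q 0 = x" "cball (q N) (2 * s) \<subseteq> F0"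
  obtains c where "c \<in> strips x a"
    "crossing_mass a c \<le> integral \<Omega> (\<lambda>y. norm (G y) * crossing_weight x a s c y)
       + integral \<Omega> (\<lambda>y. norm (G y) * chain_weight s q N y)"
proof -
  obtain c where c: "c \<in> strips x a"
    "crossing_mass a c \<le> integral \<Omega> (\<lambda>y. v y * square_bump s x y)
       + integral \<Omega> (\<lambda>y. norm (G y) * crossing_weight x a s c y)"
    using path_crossing_estimate[OF adm g a s x] by blast
  moreover have "integral \<Omega> (\<lambda>y. v y * square_bump s x y) \<le> integral \<Omega> (\<lambda>y. norm (G y) * chain_weight s q N y)"
    using chain_estimate[OF adm s(1) q(1)] square_bump_average_eq_0[OF adm s(1) q(3)] q(2) by simp
  ultimately have "crossing_mass a c \<le> integral \<Omega> (\<lambda>y. norm (G y) * crossing_weight x a s c y)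
       + integral \<Omega> (\<lambda>y. norm (G y) * chain_weight s q N y)"
    by linarith
  with c(1) show ?thesis by (rule that)
qed

text \<open>The weight collects a chain of hops from \<open>x\<close> to a point \<open>p\<close> inside \<open>F0\<close> and one
  crossing weight for each of the finitely many strips; it depends on neither the path
  nor the admissible function.\<close>

lemma uniform_flux_bound:
  fixes x p :: R2
  assumes \<Omega>: "open \<Omega>" "connected \<Omega>" and a: "0 < a" and x: "ball x (8 * a) \<subseteq> \<Omega>"
    and p: "0 < \<rho>" "ball p \<rho> \<subseteq> \<Omega>"
  obtains h Q where "weight \<Omega> h" "0 < Q"
    "\<And>g F0 v G. path g \<Longrightarrow> pathstart g = x \<Longrightarrow> pathfinish g \<in> sphere x (8 * a) \<Longrightarrow> ball p \<rho> \<subseteq> F0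
       \<Longrightarrow> cap_admissible F0 (path_image g) \<Omega> v G \<Longrightarrow> Q \<le> integral \<Omega> (\<lambda>y. norm (G y) * h y)"
proof -
  have "x \<in> \<Omega>" "p \<in> \<Omega>" using x a p by auto
  then obtain \<pi> where \<pi>: "path \<pi>" "path_image \<pi> \<subseteq> \<Omega>" "pathstart \<pi> = x" "pathfinish \<pi> = p"
    using connected_open_path_connected[OF \<Omega>(1,2)] unfolding path_connected_def by blast
  obtain s q N where s: "0 < s" "s \<le> min a (\<rho> / 4)" and q: "q 0 = x" "q N = p" "fine_chain \<Omega> s q N"
    using fine_chain_along_path[OF \<Omega>(1) \<pi>(1,2), of "min a (\<rho> / 4)"] a p(1) \<pi>(3,4) by auto
  define h where "h z = chain_weight s q N z + (\<Sum>c\<in>strips x a. crossing_weight x a s c z)" for z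
  have weight_crossings: "weight \<Omega> (crossing_weight x a s c)" if "c \<in> strips x a" for c
    using weight_crossing[OF that a s(1) _ x] s(2) by simp
  have weight_h: "weight \<Omega> h"
    unfolding h_def[abs_def] by (intro weight_add weight_chain[OF s(1) q(3)] weight_sum weight_crossings)
  have "(1, x$(other 1)) \<in> strips x a" by (simp add: strips_def)
  then have Q: "0 < Min (crossing_mass a ` strips x a)"
    using finite_strips crossing_mass_pos[OF _ a] by (subst Min_gr_iff) auto
  show ?thesis
  proof (rule that[OF weight_h Q])
    fix g F0 v G
    assume g: "path g" "pathstart g = x" "pathfinish g \<in> sphere x (8 * a)" and "ball p \<rho> \<subseteq> F0"
      and adm: "cap_admissible F0 (path_image g) \<Omega> v G"
    then have "cball (q N) (2 * s) \<subseteq> F0" using s p(1) q(2) by (force simp: subset_iff)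
    with path_flux_estimate[OF adm g a x s(1) _ q(3,1)] s(2) obtain c where c: "c \<in> strips x a"
      "crossing_mass a c \<le> integral \<Omega> (\<lambda>y. norm (G y) * crossing_weight x a s c y)
         + integral \<Omega> (\<lambda>y. norm (G y) * chain_weight s q N y)"
      by auto
    have "crossing_weight x a s c z \<le> (\<Sum>c\<in>strips x a. crossing_weight x a s c z)" for z
      using weight_crossings by (intro member_le_sum[OF c(1)] finite_strips) (auto simp: weight_def)
    then have "crossing_weight x a s c z + chain_weight s q N z \<le> h z" for z by (simp add: h_def)
    then have "integral \<Omega> (\<lambda>y. norm (G y) * crossing_weight x a s c y)
        + integral \<Omega> (\<lambda>y. norm (G y) * chain_weight s q N y) \<le> integral \<Omega> (\<lambda>y. norm (G y) * h y)"
      using weight_crossings[OF c(1)] weight_chain[OF s(1) q(3)] weight_h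
      by (intro flux_add_le[OF adm]) (auto simp: weight_def)
    with c(2) have "crossing_mass a c \<le> integral \<Omega> (\<lambda>y. norm (G y) * h y)" by linarith
    moreover have "Min (crossing_mass a ` strips x a) \<le> crossing_mass a c"
      using c(1) finite_strips by simp
    ultimately show "Min (crossing_mass a ` strips x a) \<le> integral \<Omega> (\<lambda>y. norm (G y) * h y)"
      by linarith
  qed
qed

theorem lemma2p5:
  fixes \<Omega> F :: "R2 set" and x :: R2 and r :: real
  assumes "open \<Omega>" "connected \<Omega>"
    and "compact F" "F \<subseteq> \<Omega>"
    and "\<exists>D. open D \<and> connected D \<and> D \<noteq> {} \<and> F = closure D"
    and "x \<in> \<Omega> - closure F" "r > 0" "ball x (2*r) \<subseteq> \<Omega> - closure F"
  shows "\<exists>c::real. c > 0 \<and>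
    (\<forall>g. path g \<and> pathstart g = x \<and> pathfinish g \<in> sphere x (2*r)
       \<longrightarrow> cap F (path_image g) \<Omega> > ereal c)"
proof -
  obtain D where D: "open D" "D \<noteq> {}" "F = closure D" using assms(5) by blast
  then obtain p \<rho> where "0 < \<rho>" "ball p \<rho> \<subseteq> D" by (meson ex_in_conv openE)
  then have p: "0 < \<rho>" "ball p \<rho> \<subseteq> F" "ball p \<rho> \<subseteq> \<Omega>"
    using D(3) closure_subset assms(4) by auto
  have "0 < r / 4" "ball x (8 * (r / 4)) \<subseteq> \<Omega>" using assms(7,8) by auto
  then obtain h Q where h: "weight \<Omega> h" "0 < Q"
    and flux: "\<And>g F0 v G. path g \<Longrightarrow> pathstart g = x \<Longrightarrow> pathfinish g \<in> sphere x (8 * (r / 4))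
       \<Longrightarrow> ball p \<rho> \<subseteq> F0 \<Longrightarrow> cap_admissible F0 (path_image g) \<Omega> v G
       \<Longrightarrow> Q \<le> integral \<Omega> (\<lambda>y. norm (G y) * h y)"
    by (rule uniform_flux_bound[OF assms(1,2) _ _ p(1,3)]) blast
  have "0 \<le> integral \<Omega> (\<lambda>y. (h y)^2)"
    using Cc_integrable_on(1)[OF Cc_square] h(1) by (simp add: weight_def integral_nonneg)
  with h(2) show ?thesis
    using cap_greater_than_flux_bound[OF h(2,1) flux[OF _ _ _ p(2)]]
    by (intro exI[of _ "Q^2 / (2 * (integral \<Omega> (\<lambda>y. (h y)^2) + 1))"]) auto
qed

end
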